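(* Let $\Gamma\subseteq\Lambda^+$ be reflective, with $S\subseteq\mathbb Z\Gamma$, $E(\Gamma)$ part of a basis of $(\mathbb Z\Gamma)^*$, and $\mathbb Z\Gamma$ $W$-invariant. Let $\alpha\in S$. Then $a(\alpha)$ consists of exactly two elements $\delta_1,\delta_2$, both lying in $E(\Gamma)$, with $\alpha^\vee|_{\mathbb Z\Gamma}=\delta_1+\delta_2$; moreover, every $\delta\in E(\Gamma)$ with $\langle\delta,\alpha\rangle>0$ satisfies $\langle\delta,\alpha\rangle=1$.
   Context: $G$: complex connected reductive group with Borel $B$, maximal torus $T$, weight lattice $\Lambda$, dominant weights $\Lambda^+$, simple roots $S$, Weyl group $W$ (acting on $\Lambda$ and dually), coroots $\alpha^\vee\in\mathrm{Hom}(\Lambda,\mathbb Z)$. A finitely generated $\Gamma\subseteq\Lambda^+$ is normal if $\mathbb Z\Gamma\cap\mathbb Q_{\ge0}\Gamma=\Gamma$. $\Gamma$ is reflective if it is normal and (1) $\mathrm{rk}\,\mathbb Z\Gamma=\mathrm{rk}\,\Lambda$; (2) the set of hyperplanes spanned by the codimension-1 faces of the cone $\mathbb Q_{\ge0}\Gamma$ is $W$-stable; (3) every codimension-1 face of $\mathbb Q_{\ge0}\Gamma$ meets the open positive Weyl chamber. $\Gamma^\vee=\{v\in\mathrm{Hom}_{\mathbb Z}(\mathbb Z\Gamma,\mathbb Q):\langle v,\gamma\rangle\ge0\ \forall\gamma\in\Gamma\}$; $E(\Gamma)$ is the set of primitive elements of $(\mathbb Z\Gamma)^*$ spanning extremal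 rays of $\Gamma^\vee$. For $\alpha\in S\cap\mathbb Z\Gamma$, $a(\alpha)=\{\delta\in(\mathbb Z\Gamma)^*:\langle\delta,\alpha\rangle=1,\ \delta\in E(\Gamma)\text{ or }\alpha^\vee|_{\mathbb Z\Gamma}-\delta\in E(\Gamma)\}$. *)

theory Defs
  imports "HOL-Analysis.Analysis"
begin

text \<open>The weight lattice Lambda is modelled as the integer points Z^n inside real^n;
  Hom(Lambda,Z) is identified with Z^n via the inner product.\<close>

definition lattice :: "(real ^ 'n) set" where
  "lattice = {x. \<forall>i. x $ i \<in> \<int>}"

definition refl :: "(real ^ 'n) \<Rightarrow> (real ^ 'n) \<Rightarrow> (real ^ 'n) \<Rightarrow> real ^ 'n" where
  "refl a av x = x - (av \<bullet> x) *\<^sub>R a"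

definition corefl :: "(real ^ 'n) \<Rightarrow> (real ^ 'n) \<Rightarrow> (real ^ 'n) \<Rightarrow> real ^ 'n" where
  "corefl a av y = y - (y \<bullet> a) *\<^sub>R av"

definition reduced_root_datum :: "(real ^ 'n) set \<Rightarrow> ((real ^ 'n) \<Rightarrow> real ^ 'n) \<Rightarrow> bool" where
  "reduced_root_datum R cor \<longleftrightarrow>
     finite R \<and> R \<subseteq> lattice \<and> cor ` R \<subseteq> lattice \<and> inj_on cor R \<and>
     (\<forall>a\<in>R. cor a \<bullet> a = 2) \<and>
     (\<forall>a\<in>R. \<forall>b\<in>R. refl a (cor a) b \<in> R) \<and>
     (\<forall>a\<in>R. \<forall>b\<in>R. corefl a (cor a) (cor b) \<in> cor ` R) \<and>
     (\<forall>a\<in>R. \<forall>c::real. c *\<^sub>R a \<in> R \<longrightarrow> c = 1 \<or> c = -1)"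

definition is_base :: "(real ^ 'n) set \<Rightarrow> (real ^ 'n) set \<Rightarrow> bool" where
  "is_base R S \<longleftrightarrow> S \<subseteq> R \<and> independent S \<and>
     (\<forall>b\<in>R. \<exists>c :: (real ^ 'n) \<Rightarrow> int. b = (\<Sum>a\<in>S. of_int (c a) *\<^sub>R a) \<and>
         ((\<forall>a\<in>S. c a \<ge> 0) \<or> (\<forall>a\<in>S. c a \<le> 0)))"

inductive_set weyl :: "(real ^ 'n) set \<Rightarrow> ((real ^ 'n) \<Rightarrow> real ^ 'n) \<Rightarrow> ((real ^ 'n) \<Rightarrow> real ^ 'n) set"
  for S cor where
  weyl_id: "id \<in> weyl S cor"
| weyl_step: "w \<in> weyl S cor \<Longrightarrow> a \<in> S \<Longrightarrow> refl a (cor a) \<circ> w \<in> weyl S cor"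

definition dominant :: "(real ^ 'n) set \<Rightarrow> ((real ^ 'n) \<Rightarrow> real ^ 'n) \<Rightarrow> (real ^ 'n) set" where
  "dominant S cor = {x \<in> lattice. \<forall>a\<in>S. cor a \<bullet> x \<ge> 0}"

definition open_chamber :: "(real ^ 'n) set \<Rightarrow> ((real ^ 'n) \<Rightarrow> real ^ 'n) \<Rightarrow> (real ^ 'n) set" where
  "open_chamber S cor = {x. \<forall>a\<in>S. cor a \<bullet> x > 0}"

definition fin_gen_monoid :: "(real ^ 'n) set \<Rightarrow> bool" where
  "fin_gen_monoid G \<longleftrightarrow> (\<exists>H. finite H \<and>
     G = {x. \<exists>c :: (real ^ 'n) \<Rightarrow> nat. x = (\<Sum>h\<in>H. of_nat (c h) *\<^sub>R h)})"

definition ZG :: "(real ^ 'n) set \<Rightarrow> (real ^ 'n) set" where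
  "ZG G = {x. \<exists>F (c :: (real ^ 'n) \<Rightarrow> int). finite F \<and> F \<subseteq> G \<and>
              x = (\<Sum>g\<in>F. of_int (c g) *\<^sub>R g)}"

definition QG :: "(real ^ 'n) set \<Rightarrow> (real ^ 'n) set" where
  "QG G = {x. \<exists>F c. finite F \<and> F \<subseteq> G \<and> (\<forall>g\<in>F. c g \<in> \<rat> \<and> c g \<ge> 0) \<and>
              x = (\<Sum>g\<in>F. c g *\<^sub>R g)}"

definition normal :: "(real ^ 'n) set \<Rightarrow> bool" where
  "normal G \<longleftrightarrow> ZG G \<inter> QG G = G"

definition is_face :: "(real ^ 'n) set \<Rightarrow> (real ^ 'n) set \<Rightarrow> bool" where
  "is_face C F \<longleftrightarrow> (\<exists>u. (\<forall>i. u $ i \<in> \<rat>) \<and> (\<forall>x\<in>C. u \<bullet> x \<ge> 0) \<and>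
                       F = {x\<in>C. u \<bullet> x = 0})"

definition is_facet :: "(real ^ 'n) set \<Rightarrow> (real ^ 'n) set \<Rightarrow> bool" where
  "is_facet C F \<longleftrightarrow> is_face C F \<and> dim F + 1 = dim C"

definition facet_hyperplanes :: "(real ^ 'n) set \<Rightarrow> (real ^ 'n) set set" where
  "facet_hyperplanes C = {span F | F. is_facet C F}"

definition reflective :: "(real ^ 'n) set \<Rightarrow> ((real ^ 'n) \<Rightarrow> real ^ 'n) \<Rightarrow> (real ^ 'n) set \<Rightarrow> bool" where
  "reflective S cor G \<longleftrightarrow>
     fin_gen_monoid G \<and> G \<subseteq> dominant S cor \<and> normal G \<and>
     dim (ZG G) = CARD('n) \<and>
     (\<forall>w\<in>weyl S cor. \<forall>H\<in>facet_hyperplanes (QG G). w ` H \<in> facet_hyperplanes (QG G)) \<and>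
     (\<forall>F. is_facet (QG G) F \<longrightarrow> F \<inter> open_chamber S cor \<noteq> {})"

text \<open>Homomorphisms Z Gamma -> Q are represented as functions on real^n that are
  additive on Z Gamma, rational-valued there, and zero outside Z Gamma.\<close>
definition homQ :: "(real ^ 'n) set \<Rightarrow> ((real ^ 'n) \<Rightarrow> real) set" where
  "homQ G = {f. (\<forall>x\<in>ZG G. f x \<in> \<rat>) \<and> (\<forall>x\<in>ZG G. \<forall>y\<in>ZG G. f (x + y) = f x + f y) \<and>
               (\<forall>x. x \<notin> ZG G \<longrightarrow> f x = 0)}"

definition dualZ :: "(real ^ 'n) set \<Rightarrow> ((real ^ 'n) \<Rightarrow> real) set" where
  "dualZ G = {f \<in> homQ G. \<forall>x\<in>ZG G. f x \<in> \<int>}"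

definition dual_cone :: "(real ^ 'n) set \<Rightarrow> ((real ^ 'n) \<Rightarrow> real) set" where
  "dual_cone G = {f \<in> homQ G. \<forall>g\<in>G. f g \<ge> 0}"

definition extremal_ray_gen :: "((real ^ 'n) \<Rightarrow> real) set \<Rightarrow> ((real ^ 'n) \<Rightarrow> real) \<Rightarrow> bool" where
  "extremal_ray_gen K v \<longleftrightarrow> v \<in> K \<and> v \<noteq> (\<lambda>_. 0) \<and>
     (\<forall>a\<in>K. \<forall>b\<in>K. v = (\<lambda>x. a x + b x) \<longrightarrow>
        (\<exists>t. t \<in> \<rat> \<and> t \<ge> 0 \<and> a = (\<lambda>x. t * v x)) \<and>
        (\<exists>t. t \<in> \<rat> \<and> t \<ge> 0 \<and> b = (\<lambda>x. t * v x)))"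

definition primitive :: "(real ^ 'n) set \<Rightarrow> ((real ^ 'n) \<Rightarrow> real) \<Rightarrow> bool" where
  "primitive G d \<longleftrightarrow> d \<in> dualZ G \<and> d \<noteq> (\<lambda>_. 0) \<and>
     (\<forall>d'\<in>dualZ G. \<forall>k::int. d = (\<lambda>x. of_int k * d' x) \<longrightarrow> \<bar>k\<bar> = 1)"

definition EG :: "(real ^ 'n) set \<Rightarrow> ((real ^ 'n) \<Rightarrow> real) set" where
  "EG G = {d. primitive G d \<and> extremal_ray_gen (dual_cone G) d}"

definition part_of_basis :: "(real ^ 'n) set \<Rightarrow> ((real ^ 'n) \<Rightarrow> real) set \<Rightarrow> bool" where
  "part_of_basis G E \<longleftrightarrow> (\<exists>B. B \<subseteq> dualZ G \<and> E \<subseteq> B \<and>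
     (\<forall>F (c :: ((real ^ 'n) \<Rightarrow> real) \<Rightarrow> int). finite F \<and> F \<subseteq> B \<and>
         (\<forall>x. (\<Sum>f\<in>F. of_int (c f) * f x) = 0) \<longrightarrow> (\<forall>f\<in>F. c f = 0)) \<and>
     (\<forall>d\<in>dualZ G. \<exists>F (c :: ((real ^ 'n) \<Rightarrow> real) \<Rightarrow> int). finite F \<and> F \<subseteq> B \<and>
         d = (\<lambda>x. \<Sum>f\<in>F. of_int (c f) * f x)))"

definition restr :: "(real ^ 'n) set \<Rightarrow> (real ^ 'n) \<Rightarrow> ((real ^ 'n) \<Rightarrow> real)" where
  "restr G v = (\<lambda>x. if x \<in> ZG G then v \<bullet> x else 0)"

definition a_set :: "(real ^ 'n) set \<Rightarrow> ((real ^ 'n) \<Rightarrow> real ^ 'n) \<Rightarrow> (real ^ 'n) \<Rightarrow> ((real ^ 'n) \<Rightarrow> real) set" where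
  "a_set G cor a = {d \<in> dualZ G. d a = 1 \<and>
      (d \<in> EG G \<or> (\<lambda>x. restr G (cor a) x - d x) \<in> EG G)}"

end

theory Submission
  imports Defs
begin

text \<open>
  Write \<open>s\<close> for the simple reflection of \<open>\<alpha>\<close>.  A primitive generator \<open>\<delta>\<close> of an extremal ray of
  \<open>\<Gamma>\<^sup>\<vee>\<close> is the normal of a facet of the cone \<open>\<rat>\<^sub>\<ge>\<^sub>0\<Gamma>\<close>; since the facet hyperplanes are
  \<open>W\<close>-stable and \<open>\<int>\<Gamma>\<close> is \<open>W\<close>-invariant, \<open>\<delta> \<circ> s = \<delta> - \<langle>\<delta>,\<alpha>\<rangle>\<alpha>\<^sup>\<vee>\<close> is \<open>\<plusminus>\<delta>'\<close> for another
  \<open>\<delta>' \<in> E(\<Gamma>)\<close>.  Both facets meet the open chamber, where \<open>\<alpha>\<^sup>\<vee>\<close> is positive; evaluating there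
  excludes the sign \<open>+\<close> when \<open>\<langle>\<delta>,\<alpha>\<rangle> \<noteq> 0\<close> and forces \<open>\<langle>\<delta>,\<alpha>\<rangle> > 0\<close>.  Hence
  \<open>\<langle>\<delta>,\<alpha>\<rangle>\<alpha>\<^sup>\<vee> = \<delta> + \<delta>'\<close>, and as \<open>E(\<Gamma>)\<close> is part of a basis, \<open>\<langle>\<delta>,\<alpha>\<rangle> = 1\<close> and the
  decomposition \<open>\<alpha>\<^sup>\<vee> = \<delta> + \<delta>'\<close> is unique.  Such a \<open>\<delta>\<close> exists because \<open>\<alpha>\<^sup>\<vee>\<close> lies in
  \<open>\<Gamma>\<^sup>\<vee>\<close>, which is generated by \<open>E(\<Gamma>)\<close>, and \<open>\<langle>\<alpha>\<^sup>\<vee>,\<alpha>\<rangle> = 2\<close>.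
\<close>

definition rat_vec :: "real^'n \<Rightarrow> bool" where
  "rat_vec v \<longleftrightarrow> (\<forall>i. v $ i \<in> \<rat>)"

lemma rat_vec_inner: "rat_vec v \<Longrightarrow> rat_vec w \<Longrightarrow> v \<bullet> w \<in> \<rat>"
  unfolding inner_vec_def rat_vec_def by (intro Rats_sum Rats_mult) auto

lemma lattice_imp_rat_vec: "x \<in> lattice \<Longrightarrow> rat_vec x"
  unfolding lattice_def rat_vec_def using Ints_subset_Rats by blast

lemma rat_vec_diff: "rat_vec v \<Longrightarrow> rat_vec w \<Longrightarrow> rat_vec (v - w)"
  unfolding rat_vec_def by auto

lemma rat_vec_scaleR: "c \<in> \<rat> \<Longrightarrow> rat_vec w \<Longrightarrow> rat_vec (c *\<^sub>R w)"
  unfolding rat_vec_def by auto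

lemma rat_vec_sum: "(\<And>x. x \<in> A \<Longrightarrow> rat_vec (f x)) \<Longrightarrow> rat_vec (\<Sum>x\<in>A. f x)"
  unfolding rat_vec_def by (auto intro: Rats_sum simp: sum_component)

lemma rat_common_denominator:
  assumes "finite A" "\<forall>x\<in>A. q x \<in> \<rat>"
  shows "\<exists>N::int. N > 0 \<and> (\<forall>x\<in>A. of_int N * q x \<in> \<int>)"
  using assms
proof (induction A rule: finite_induct)
  case empty then show ?case by (intro exI[of _ 1]) auto
next
  case (insert a A)
  then obtain N where N: "N > 0" "\<forall>x\<in>A. of_int N * q x \<in> \<int>" by auto
  from insert have "q a \<in> \<rat>" by auto
  then obtain p d where pd: "d > 0" "q a = of_int p / of_int d" by (elim Rats_cases') auto
  have "of_int (N*d) * q x \<in> \<int>" if "x \<in> A" for x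
  proof -
    have "of_int (N*d) * q x = of_int d * (of_int N * q x)" by simp
    thus ?thesis using N(2) that by (metis Ints_mult Ints_of_int)
  qed
  moreover have "of_int (N*d) * q a \<in> \<int>" using pd by simp
  ultimately show ?case using N pd by (intro exI[of _ "N*d"]) auto
qed

text \<open>Induction on \<open>A\<close>: project along a rational vector not orthogonal to the new element.\<close>
lemma orthogonal_complement_span_rat:
  fixes A :: "(real^'n) set"
  assumes "finite A" "\<forall>a\<in>A. rat_vec a"
  shows "{w. \<forall>a\<in>A. a \<bullet> w = 0} \<subseteq> span {w. rat_vec w \<and> (\<forall>a\<in>A. a \<bullet> w = 0)}"
  using assms
proof (induction A rule: finite_induct)
  case empty
  have "(Basis :: (real^'n) set) \<subseteq> {w. rat_vec w}"
    unfolding Basis_vec_def rat_vec_def axis_def by auto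
  hence "span (Basis :: (real^'n) set) \<subseteq> span {w. rat_vec w}" by (rule span_mono)
  then show ?case by simp
next
  case (insert a A)
  let ?W = "{w. rat_vec w \<and> (\<forall>a\<in>A. a \<bullet> w = 0)}"
  let ?W' = "{w. rat_vec w \<and> (\<forall>b\<in>insert a A. b \<bullet> w = 0)}"
  have IH: "{w. \<forall>a\<in>A. a \<bullet> w = 0} \<subseteq> span ?W" using insert by auto
  show ?case
  proof (cases "\<exists>r0\<in>?W. a \<bullet> r0 \<noteq> 0")
    case False
    hence "span ?W \<subseteq> span ?W'" by (intro span_mono) auto
    then show ?thesis using IH by auto
  next
    case True
    then obtain r0 where r0: "r0 \<in> ?W" "a \<bullet> r0 \<noteq> 0" by blast
    define P where "P = (\<lambda>r. r - ((a \<bullet> r) / (a \<bullet> r0)) *\<^sub>R r0)"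
    have "linear P" unfolding P_def
      by (rule linearI) (simp_all add: inner_add_right algebra_simps add_divide_distrib scaleR_add_left)
    have PW: "P ` ?W \<subseteq> ?W'"
    proof
      fix y assume "y \<in> P ` ?W"
      then obtain r where r: "rat_vec r" "\<forall>a\<in>A. a \<bullet> r = 0" "y = P r" by blast
      have "rat_vec y" unfolding r(3) P_def using r r0 insert.prems
        by (intro rat_vec_diff rat_vec_scaleR) (auto intro!: Rats_divide rat_vec_inner)
      moreover have "\<forall>b\<in>insert a A. b \<bullet> y = 0"
        unfolding r(3) P_def using r r0 by (simp add: inner_diff_right)
      ultimately show "y \<in> ?W'" by auto
    qed
    show ?thesis
    proof
      fix w assume w: "w \<in> {w. \<forall>b\<in>insert a A. b \<bullet> w = 0}"
      hence "P w \<in> P ` span ?W" using IH by blast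
      also have "\<dots> = span (P ` ?W)" by (rule span_linear_image[OF \<open>linear P\<close>, symmetric])
      also have "\<dots> \<subseteq> span ?W'" by (rule span_mono[OF PW])
      finally show "w \<in> span ?W'" using w unfolding P_def by simp
    qed
  qed
qed

lemma inner_eq_zero_on_span:
  assumes "x \<in> span A" "\<forall>a\<in>A. v \<bullet> a = 0" shows "v \<bullet> x = 0"
proof -
  have "span A \<subseteq> {x. v \<bullet> x = 0}" using assms(2) by (intro span_minimal subspace_hyperplane) auto
  thus ?thesis using assms(1) by auto
qed

lemma rat_dual_vector:
  fixes B :: "(real^'n) set"
  assumes "finite B" "\<forall>b\<in>B. rat_vec b" "independent B" "b \<in> B"
  shows "\<exists>w. rat_vec w \<and> (\<forall>b'\<in>B-{b}. b' \<bullet> w = 0) \<and> w \<bullet> b = 1"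
proof -
  obtain y z where yz: "y \<in> span (B - {b})" "\<And>w. w \<in> span (B - {b}) \<Longrightarrow> orthogonal z w" "b = y + z"
    by (rule orthogonal_subspace_decomp_exists[of "B - {b}" b]) blast
  have "z \<noteq> 0" using yz assms(3,4) unfolding dependent_def by auto
  have "z \<bullet> y = 0" using yz(2)[OF yz(1)] unfolding orthogonal_def by simp
  hence zb: "z \<bullet> b \<noteq> 0" using yz(3) \<open>z \<noteq> 0\<close> by (simp add: inner_add_right)
  have "z \<in> {w. \<forall>a\<in>B-{b}. a \<bullet> w = 0}" using yz(2) by (auto simp: orthogonal_def inner_commute span_base)
  with orthogonal_complement_span_rat[of "B - {b}"] assms(1,2)
  have zs: "z \<in> span {w. rat_vec w \<and> (\<forall>a\<in>B-{b}. a \<bullet> w = 0)}" by auto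
  have "\<exists>r. rat_vec r \<and> (\<forall>a\<in>B-{b}. a \<bullet> r = 0) \<and> b \<bullet> r \<noteq> 0"
  proof (rule ccontr)
    assume "\<not> ?thesis"
    hence "\<forall>r\<in>{w. rat_vec w \<and> (\<forall>a\<in>B-{b}. a \<bullet> w = 0)}. b \<bullet> r = 0" by auto
    from inner_eq_zero_on_span[OF zs this] zb show False by (simp add: inner_commute)
  qed
  then obtain r where r: "rat_vec r" "\<forall>a\<in>B-{b}. a \<bullet> r = 0" "b \<bullet> r \<noteq> 0" by auto
  have "b \<bullet> r \<in> \<rat>" using r assms(2,4) rat_vec_inner by auto
  with r show ?thesis
    by (intro exI[of _ "(1 / (b \<bullet> r)) *\<^sub>R r"]) (auto intro!: rat_vec_scaleR simp: inner_commute)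
qed

lemma kernel_subset_imp_multiple:
  fixes p q :: "real^'n"
  assumes "\<forall>x. q \<bullet> x = 0 \<longrightarrow> p \<bullet> x = 0"
  shows "\<exists>l. p = l *\<^sub>R q"
proof (cases "q = 0")
  case True
  hence "p \<bullet> p = 0" using assms by auto
  thus ?thesis using True by auto
next
  case False
  define l where "l = (p \<bullet> q) / (q \<bullet> q)"
  define r where "r = p - l *\<^sub>R q"
  have "q \<bullet> r = 0" using False unfolding r_def l_def by (simp add: inner_diff_right inner_commute)
  moreover from this have "p \<bullet> r = 0" using assms by auto
  ultimately have "r \<bullet> r = 0" unfolding r_def by (simp add: inner_diff_left inner_commute)
  thus ?thesis unfolding r_def by (intro exI[of _ l]) simp
qed

lemma lattice_inner_Ints: "x \<in> lattice \<Longrightarrow> y \<in> lattice \<Longrightarrow> x \<bullet> y \<in> \<int>"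
  unfolding lattice_def inner_vec_def by (intro Ints_sum Ints_mult) auto

section \<open>The lattice \<open>\<int>\<Gamma>\<close> and its rational dual\<close>

lemma ZG_subset_lattice: "G \<subseteq> lattice \<Longrightarrow> ZG G \<subseteq> lattice"
  unfolding ZG_def lattice_def by (fastforce simp: sum_component intro!: Ints_sum Ints_mult)

lemma subset_ZG: "G \<subseteq> ZG G"
  unfolding ZG_def by (auto intro!: exI[of _ "{_}"] exI[of _ "\<lambda>_. 1"])

lemma zero_in_ZG: "0 \<in> ZG G"
  unfolding ZG_def by (auto intro!: exI[of _ "{}"])

lemma ZG_add:
  assumes "x \<in> ZG G" "y \<in> ZG G" shows "x + y \<in> ZG G"
proof -
  obtain F c where F: "finite F" "F \<subseteq> G" "x = (\<Sum>g\<in>F. of_int (c g) *\<^sub>R g)"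
    using assms(1) unfolding ZG_def by auto
  obtain F' c' where F': "finite F'" "F' \<subseteq> G" "y = (\<Sum>g\<in>F'. of_int (c' g) *\<^sub>R g)"
    using assms(2) unfolding ZG_def by auto
  define d where "d g = (if g \<in> F then c g else 0) + (if g \<in> F' then c' g else 0)" for g
  have "x = (\<Sum>g\<in>F\<union>F'. of_int (if g \<in> F then c g else 0) *\<^sub>R g)"
    unfolding F by (rule sum.mono_neutral_cong_left) (use F F' in auto)
  moreover have "y = (\<Sum>g\<in>F\<union>F'. of_int (if g \<in> F' then c' g else 0) *\<^sub>R g)"
    unfolding F' by (rule sum.mono_neutral_cong_left) (use F F' in auto)
  ultimately have "x + y = (\<Sum>g\<in>F\<union>F'. of_int (d g) *\<^sub>R g)"
    unfolding d_def by (simp add: sum.distrib[symmetric] scaleR_add_left)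
  thus ?thesis unfolding ZG_def mem_Collect_eq using F F' by (intro exI[of _ "F \<union> F'"] exI[of _ d]) auto
qed

lemma ZG_of_int_scaleR:
  assumes "x \<in> ZG G" shows "of_int m *\<^sub>R x \<in> ZG G"
proof -
  obtain F c where F: "finite F" "F \<subseteq> G" "x = (\<Sum>g\<in>F. of_int (c g) *\<^sub>R g)"
    using assms unfolding ZG_def by auto
  have "of_int m *\<^sub>R x = (\<Sum>g\<in>F. of_int (m * c g) *\<^sub>R g)"
    unfolding F by (simp add: scaleR_sum_right)
  thus ?thesis unfolding ZG_def mem_Collect_eq using F by (intro exI[of _ F] exI[of _ "\<lambda>g. m * c g"]) auto
qed

lemma ZG_sum: "finite A \<Longrightarrow> (\<And>x. x \<in> A \<Longrightarrow> f x \<in> ZG G) \<Longrightarrow> (\<Sum>x\<in>A. f x) \<in> ZG G"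
  by (induction A rule: finite_induct) (auto intro: ZG_add zero_in_ZG)

lemma sum_scaleR_in_span: "A \<subseteq> S \<Longrightarrow> (\<Sum>x\<in>A. c x *\<^sub>R x) \<in> span S"
  by (intro span_sum span_scale span_base) auto

lemma ZG_subset_span: "ZG G \<subseteq> span G"
  unfolding ZG_def by (auto intro: sum_scaleR_in_span)

lemma homQ_add: "f \<in> homQ G \<Longrightarrow> x \<in> ZG G \<Longrightarrow> y \<in> ZG G \<Longrightarrow> f (x + y) = f x + f y"
  unfolding homQ_def by blast

lemma homQ_zero: "f \<in> homQ G \<Longrightarrow> f 0 = 0"
proof -
  assume f: "f \<in> homQ G"
  have "f (0 + 0) = f 0 + f 0" using homQ_add[OF f zero_in_ZG zero_in_ZG] .
  thus ?thesis by simp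
qed

lemma homQ_of_nat_scaleR: "f \<in> homQ G \<Longrightarrow> x \<in> ZG G \<Longrightarrow> f (of_nat k *\<^sub>R x) = of_nat k * f x"
proof (induction k)
  case 0 then show ?case using homQ_zero by simp
next
  case (Suc k)
  have "of_nat k *\<^sub>R x \<in> ZG G" using ZG_of_int_scaleR[OF Suc(3), of "int k"] by simp
  hence "f (x + of_nat k *\<^sub>R x) = f x + f (of_nat k *\<^sub>R x)" using homQ_add[OF Suc(2,3)] by blast
  thus ?case using Suc by (simp add: algebra_simps)
qed

lemma homQ_of_int_scaleR:
  assumes f: "f \<in> homQ G" and x: "x \<in> ZG G" shows "f (of_int m *\<^sub>R x) = of_int m * f x"
proof (cases "m \<ge> 0")
  case True
  then show ?thesis using homQ_of_nat_scaleR[OF f x, of "nat m"] by simp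
next
  case False
  define k where "k = nat (- m)"
  have k: "m = - int k" using False unfolding k_def by simp
  have y: "of_nat k *\<^sub>R x \<in> ZG G" using ZG_of_int_scaleR[OF x, of "int k"] by simp
  have "f (of_nat k *\<^sub>R x + of_int m *\<^sub>R x) = f (of_nat k *\<^sub>R x) + f (of_int m *\<^sub>R x)"
    using homQ_add[OF f y ZG_of_int_scaleR[OF x]] .
  then show ?thesis using homQ_of_nat_scaleR[OF f x, of k] homQ_zero[OF f] k by simp
qed

lemma homQ_sum:
  assumes "f \<in> homQ G" "finite B" "B \<subseteq> ZG G"
  shows "f (\<Sum>b\<in>B. of_int (m b) *\<^sub>R b) = (\<Sum>b\<in>B. of_int (m b) * f b)"
  using assms(2,3)
proof (induction B rule: finite_induct)
  case empty then show ?case using homQ_zero[OF assms(1)] by simp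
next
  case (insert b B)
  have "(\<Sum>b\<in>B. of_int (m b) *\<^sub>R b) \<in> ZG G" "of_int (m b) *\<^sub>R b \<in> ZG G"
    using insert by (auto intro!: ZG_sum ZG_of_int_scaleR)
  with insert show ?case
    by (simp add: homQ_add[OF assms(1)] homQ_of_int_scaleR[OF assms(1)])
qed

lemma homQ_rat_combination:
  assumes f: "f \<in> homQ G" and B: "finite B" "B \<subseteq> ZG G" and x: "x \<in> ZG G"
    and r: "\<forall>b\<in>B. r b \<in> \<rat>" "x = (\<Sum>b\<in>B. r b *\<^sub>R b)"
  shows "f x = (\<Sum>b\<in>B. r b * f b)"
proof -
  obtain N :: int where N: "N > 0" "\<forall>b\<in>B. of_int N * r b \<in> \<int>"
    using rat_common_denominator[OF B(1) r(1)] by auto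
  have "\<forall>b\<in>B. \<exists>m::int. of_int N * r b = of_int m" using N(2) Ints_cases by metis
  then obtain m where m: "\<And>b. b \<in> B \<Longrightarrow> of_int N * r b = of_int (m b)" by metis
  have Nx: "of_int N *\<^sub>R x = (\<Sum>b\<in>B. of_int (m b) *\<^sub>R b)"
    unfolding r(2) scaleR_sum_right using m by (intro sum.cong) auto
  have "of_int N * f x = f (of_int N *\<^sub>R x)" using homQ_of_int_scaleR[OF f x] by simp
  also have "\<dots> = (\<Sum>b\<in>B. of_int (m b) * f b)" unfolding Nx by (rule homQ_sum[OF f B])
  also have "\<dots> = (\<Sum>b\<in>B. of_int N * r b * f b)" using m by (intro sum.cong) auto
  also have "\<dots> = of_int N * (\<Sum>b\<in>B. r b * f b)" by (simp add: sum_distrib_left mult.assoc)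
  finally show ?thesis using N(1) by simp
qed

lemma homQ_scale:
  assumes "f \<in> homQ G" "t \<in> \<rat>" shows "(\<lambda>x. t * f x) \<in> homQ G"
  using assms unfolding homQ_def by (auto simp: distrib_left)

lemma restr_in_homQ:
  assumes "rat_vec v" "G \<subseteq> lattice"
  shows "restr G v \<in> homQ G"
  using ZG_subset_lattice[OF assms(2)] assms(1) ZG_add
  unfolding homQ_def restr_def by (auto simp: inner_add_right intro!: rat_vec_inner lattice_imp_rat_vec)

lemma restr_in_dualZ:
  assumes "v \<in> lattice" "G \<subseteq> lattice"
  shows "restr G v \<in> dualZ G"
  using restr_in_homQ[OF lattice_imp_rat_vec[OF assms(1)] assms(2)] ZG_subset_lattice[OF assms(2)] assms(1)
  unfolding dualZ_def restr_def by (auto intro: lattice_inner_Ints)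

lemma restr_dualZ_Ints: "restr G v \<in> dualZ G \<Longrightarrow> x \<in> ZG G \<Longrightarrow> v \<bullet> x \<in> \<int>"
  unfolding dualZ_def restr_def by auto

lemma restr_scaleR: "restr G (c *\<^sub>R v) = (\<lambda>x. c * restr G v x)"
  unfolding restr_def by auto

lemma restr_add: "restr G (v + w) = (\<lambda>x. restr G v x + restr G w x)"
  unfolding restr_def by (auto simp: inner_add_left)

section \<open>Extremal rays and primitive elements\<close>

lemma dual_cone_scale:
  assumes "f \<in> dual_cone G" "t \<in> \<rat>" "t \<ge> 0" shows "(\<lambda>x. t * f x) \<in> dual_cone G"
  using assms homQ_scale unfolding dual_cone_def by auto

lemma extremal_ray_genD:
  assumes "extremal_ray_gen K v" "a \<in> K" "b \<in> K" "v = (\<lambda>x. a x + b x)"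
  shows "\<exists>t. t \<in> \<rat> \<and> t \<ge> 0 \<and> a = (\<lambda>x. t * v x)"
  using assms unfolding extremal_ray_gen_def by blast

lemma extremal_ray_gen_scale:
  assumes g: "extremal_ray_gen (dual_cone G) g" and t: "t \<in> \<rat>" "t > 0"
  shows "extremal_ray_gen (dual_cone G) (\<lambda>x. t * g x)"
proof -
  have it: "1/t \<in> \<rat>" "1/t \<ge> 0" using t by auto
  have part: "\<exists>s. s \<in> \<rat> \<and> 0 \<le> s \<and> a = (\<lambda>x. s * (t * g x))"
    if ab: "a \<in> dual_cone G" "b \<in> dual_cone G" "(\<lambda>x. t * g x) = (\<lambda>x. a x + b x)" for a b
  proof -
    have "g = (\<lambda>x. (1/t) * a x + (1/t) * b x)"
    proof
      fix x have "t * g x = a x + b x" using fun_cong[OF ab(3), of x] by simp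
      thus "g x = (1/t) * a x + (1/t) * b x" using t by (simp add: field_simps)
    qed
    then obtain s where s: "s \<in> \<rat>" "s \<ge> 0" "(\<lambda>x. (1/t) * a x) = (\<lambda>x. s * g x)"
      using extremal_ray_genD[OF g dual_cone_scale[OF ab(1) it] dual_cone_scale[OF ab(2) it]] by blast
    have "a = (\<lambda>x. s * (t * g x))"
    proof
      fix x have "(1/t) * a x = s * g x" using fun_cong[OF s(3), of x] by simp
      thus "a x = s * (t * g x)" using t by (simp add: field_simps)
    qed
    thus ?thesis using s by auto
  qed
  have "g \<in> dual_cone G" "g \<noteq> (\<lambda>_. 0)" using g unfolding extremal_ray_gen_def by auto
  then obtain y where "g y \<noteq> 0" by auto
  show ?thesis unfolding extremal_ray_gen_def
  proof (intro conjI ballI impI)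
    show "(\<lambda>x. t * g x) \<in> dual_cone G" using \<open>g \<in> dual_cone G\<close> t by (intro dual_cone_scale) auto
    show "(\<lambda>x. t * g x) \<noteq> (\<lambda>_. 0)" using \<open>g y \<noteq> 0\<close> t by (auto dest: fun_cong[of _ _ y])
    fix a b assume ab: "a \<in> dual_cone G" "b \<in> dual_cone G" "(\<lambda>x. t * g x) = (\<lambda>x. a x + b x)"
    show "\<exists>s. s \<in> \<rat> \<and> 0 \<le> s \<and> a = (\<lambda>x. s * (t * g x))" by (rule part[OF ab])
    show "\<exists>s. s \<in> \<rat> \<and> 0 \<le> s \<and> b = (\<lambda>x. s * (t * g x))"
      by (rule part[OF ab(2,1)]) (use ab(3) in \<open>simp add: add.commute\<close>)
  qed
qed

lemma primitiveD:
  assumes "primitive G f" "d' \<in> dualZ G" "f = (\<lambda>x. of_int k * d' x)"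
  shows "\<bar>k\<bar> = 1"
  using assms unfolding primitive_def by blast

lemma primitive_neg: assumes "primitive G d" shows "primitive G (\<lambda>x. - d x)"
  unfolding primitive_def
proof (intro conjI ballI allI impI)
  show "(\<lambda>x. - d x) \<in> dualZ G" using assms unfolding primitive_def dualZ_def homQ_def by auto
  show "(\<lambda>x. - d x) \<noteq> (\<lambda>_. 0)"
    using assms unfolding primitive_def by (metis add.inverse_neutral minus_minus)
  fix d' k assume d': "d' \<in> dualZ G" "(\<lambda>x. - d x) = (\<lambda>x. of_int k * d' x)"
  have "d = (\<lambda>x. of_int (-k) * d' x)"
  proof
    fix x show "d x = of_int (-k) * d' x" using fun_cong[OF d'(2), of x] by simp
  qed
  thus "\<bar>k\<bar> = 1" using primitiveD[OF assms d'(1)] by fastforce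
qed

lemma dualZ_eq_multiple_primitive:
  assumes "f \<in> dualZ G" "f \<noteq> (\<lambda>_. 0)"
  shows "\<exists>d k. primitive G d \<and> k \<noteq> 0 \<and> f = (\<lambda>x. of_int k * d x)"
proof -
  obtain x0 where fx0: "f x0 \<noteq> 0" using assms(2) by auto
  have x0: "x0 \<in> ZG G" using assms(1) fx0 unfolding dualZ_def homQ_def by auto
  text \<open>Each proper factorisation at least halves the integer \<open>\<bar>f x0\<bar>\<close>.\<close>
  have "\<forall>f. f \<in> dualZ G \<and> f x0 \<noteq> 0 \<and> \<bar>f x0\<bar> \<le> real m \<longrightarrow>
           (\<exists>d k. primitive G d \<and> k \<noteq> 0 \<and> f = (\<lambda>x. of_int k * d x))" for m
  proof (induction m)
    case 0 then show ?case by auto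
  next
    case (Suc m)
    show ?case
    proof (intro allI impI, elim conjE)
      fix f assume f: "f \<in> dualZ G" "f x0 \<noteq> 0" "\<bar>f x0\<bar> \<le> real (Suc m)"
      show "\<exists>d k. primitive G d \<and> k \<noteq> 0 \<and> f = (\<lambda>x. of_int k * d x)"
      proof (cases "primitive G f")
        case True thus ?thesis by (intro exI[of _ f] exI[of _ 1]) auto
      next
        case False
        with f obtain d' k where d': "d' \<in> dualZ G" "f = (\<lambda>x. of_int k * d' x)" "\<bar>k\<bar> \<noteq> 1"
          unfolding primitive_def by auto
        have fx: "f x0 = of_int k * d' x0" using d'(2) by simp
        hence k0: "k \<noteq> 0" and dx0: "d' x0 \<noteq> 0" using f(2) by auto
        have "d' x0 \<in> \<int>" using d'(1) x0 unfolding dualZ_def by auto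
        hence "1 \<le> \<bar>d' x0\<bar>" using dx0 by (rule Ints_nonzero_abs_ge1)
        moreover have "real_of_int \<bar>k\<bar> \<ge> 2" using k0 d'(3) by linarith
        ultimately have "\<bar>d' x0\<bar> \<le> real m"
          using f(3) mult_right_mono[of 2 "real_of_int \<bar>k\<bar>" "\<bar>d' x0\<bar>"] unfolding fx abs_mult by simp
        then obtain d k' where dk: "primitive G d" "k' \<noteq> 0" "d' = (\<lambda>x. of_int k' * d x)"
          using Suc.IH d'(1) dx0 by blast
        have "f = (\<lambda>x. of_int (k * k') * d x)" unfolding d'(2) dk(3) by auto
        thus ?thesis using dk k0 by (intro exI[of _ d] exI[of _ "k * k'"]) auto
      qed
    qed
  qed
  thus ?thesis using assms(1) fx0 real_nat_ceiling_ge[of "\<bar>f x0\<bar>"] by blast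
qed

lemma primitive_rat_multiple:
  assumes f: "primitive G f" and g: "primitive G g" and eq: "f = (\<lambda>x. l * g x)" and l: "l \<in> \<rat>"
  shows "l = 1 \<or> l = -1"
proof -
  obtain p q where pq: "q > 0" "coprime p q" "l = of_int p / of_int q" using Rats_cases'[OF l] by blast
  have fZ: "f \<in> dualZ G" and gZ: "g \<in> dualZ G" using f g unfolding primitive_def by auto
  define g' where "g' = (\<lambda>x. (1 / of_int q) * g x)"
  have "g' \<in> homQ G" unfolding g'_def using gZ unfolding dualZ_def by (intro homQ_scale) auto
  moreover have "g' x \<in> \<int>" if x: "x \<in> ZG G" for x
  proof -
    obtain m where m: "g x = of_int m" using gZ x unfolding dualZ_def by (auto elim: Ints_cases)
    obtain n where n: "f x = of_int n" using fZ x unfolding dualZ_def by (auto elim: Ints_cases)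
    have "of_int n = (of_int p / of_int q) * (of_int m :: real)" using fun_cong[OF eq, of x] m n pq(3) by simp
    hence "of_int (q * n) = (of_int (p * m) :: real)" using pq(1) by (simp add: field_simps)
    hence "q dvd p * m" by (metis dvd_triv_left of_int_eq_iff)
    hence "q dvd m" using pq(2) by (simp add: coprime_commute coprime_dvd_mult_right_iff)
    then obtain r where "m = q * r" by blast
    thus "g' x \<in> \<int>" unfolding g'_def m using pq(1) by simp
  qed
  ultimately have "g' \<in> dualZ G" unfolding dualZ_def by auto
  moreover have "g = (\<lambda>x. of_int q * g' x)" unfolding g'_def using pq(1) by auto
  ultimately have q1: "q = 1" using primitiveD[OF g] pq(1) by force
  have "f = (\<lambda>x. of_int p * g x)" using eq pq(3) q1 by simp
  hence "\<bar>p\<bar> = 1" by (rule primitiveD[OF f gZ])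
  thus ?thesis using pq(3) q1 by (auto simp: abs_if split: if_splits)
qed

lemma primitive_comp_involution:
  fixes G :: "(real^'n) set" and s :: "real^'n \<Rightarrow> real^'n"
  assumes d: "primitive G d"
    and s: "\<And>x. x \<in> ZG G \<Longrightarrow> s x \<in> ZG G" "\<And>x. x \<in> ZG G \<Longrightarrow> s (s x) = x"
      "\<And>x y. x \<in> ZG G \<Longrightarrow> y \<in> ZG G \<Longrightarrow> s (x + y) = s x + s y"
  shows "primitive G (\<lambda>x. if x \<in> ZG G then d (s x) else 0)"
proof -
  define comp where "comp f = (\<lambda>x. if x \<in> ZG G then f (s x) else 0)" for f :: "real^'n \<Rightarrow> real"
  have comp_dualZ: "comp f \<in> dualZ G" if f: "f \<in> dualZ G" for f
    using f unfolding comp_def dualZ_def homQ_def by (auto simp: s ZG_add)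
  have comp_comp: "comp (comp f) = f" if f: "f \<in> dualZ G" for f
  proof
    fix x show "comp (comp f) x = f x"
      using f unfolding comp_def dualZ_def homQ_def by (auto simp: s)
  qed
  have dZ: "d \<in> dualZ G" using d unfolding primitive_def by auto
  have "comp d \<noteq> (\<lambda>_. 0)"
  proof
    assume "comp d = (\<lambda>_. 0)"
    hence "comp (comp d) = (\<lambda>_. 0)" unfolding comp_def by (simp add: fun_eq_iff)
    thus False using d comp_comp[OF dZ] unfolding primitive_def by auto
  qed
  moreover have "\<bar>m\<bar> = 1" if d': "d' \<in> dualZ G" "comp d = (\<lambda>x. of_int m * d' x)" for d' m
  proof -
    have "comp (comp d) = (\<lambda>x. of_int m * comp d' x)"
      unfolding d'(2) by (auto simp: comp_def)
    thus ?thesis using primitiveD[OF d comp_dualZ[OF d'(1)]] comp_comp[OF dZ] by simp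
  qed
  ultimately show ?thesis using comp_dualZ[OF dZ] unfolding primitive_def comp_def by blast
qed

lemma sum_indicator_apply:
  assumes "finite F" "d \<in> F"
  shows "(\<Sum>f\<in>F. of_int (if f = d then 1 else 0) * f x) = (d x :: real)"
  using assms by (simp add: if_distrib[of "\<lambda>t. of_int t * _"] cong: if_cong)

lemma part_of_basisE:
  fixes G :: "(real^'n) set"
  assumes "part_of_basis G E"
  obtains B where "E \<subseteq> B"
    "\<And>F c. finite F \<Longrightarrow> F \<subseteq> B \<Longrightarrow> (\<forall>x. (\<Sum>f\<in>F. of_int (c f) * f x) = 0) \<Longrightarrow> \<forall>f\<in>F. c f = 0"
    "\<And>d. d \<in> dualZ G \<Longrightarrow> \<exists>F c. finite F \<and> F \<subseteq> B \<and> d = (\<lambda>x. \<Sum>f\<in>F. of_int (c f) * f x)"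
proof -
  from assms obtain B where B: "B \<subseteq> dualZ G" "E \<subseteq> B"
    "\<forall>F (c :: ((real ^ 'n) \<Rightarrow> real) \<Rightarrow> int). finite F \<and> F \<subseteq> B \<and>
       (\<forall>x. (\<Sum>f\<in>F. of_int (c f) * f x) = 0) \<longrightarrow> (\<forall>f\<in>F. c f = 0)"
    "\<forall>d\<in>dualZ G. \<exists>F (c :: ((real ^ 'n) \<Rightarrow> real) \<Rightarrow> int). finite F \<and> F \<subseteq> B \<and>
       d = (\<lambda>x. \<Sum>f\<in>F. of_int (c f) * f x)"
    unfolding part_of_basis_def by (elim exE conjE)
  show ?thesis
  proof (rule that[OF B(2)])
    fix F c assume "finite F" "F \<subseteq> B" "\<forall>x. (\<Sum>f\<in>F. of_int (c f) * f x) = 0"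
    thus "\<forall>f\<in>F. c f = 0" using B(3) by simp
  next
    fix d assume "d \<in> dualZ G"
    thus "\<exists>F c. finite F \<and> F \<subseteq> B \<and> d = (\<lambda>x. \<Sum>f\<in>F. of_int (c f) * f x)" using B(4) by simp
  qed
qed

lemma part_of_basis_sum_dvd:
  assumes pb: "part_of_basis G E" and d: "d1 \<in> E" "d2 \<in> E" "d1 \<noteq> d2"
    and c: "c \<in> dualZ G" and eq: "(\<lambda>x. of_int k * c x) = (\<lambda>x. d1 x + d2 x)"
  shows "k dvd 1"
proof -
  obtain B where B: "E \<subseteq> B"
    and indep: "\<And>F c. finite F \<Longrightarrow> F \<subseteq> B \<Longrightarrow> (\<forall>x. (\<Sum>f\<in>F. of_int (c f) * f x) = 0) \<Longrightarrow> \<forall>f\<in>F. c f = 0"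
    and gen: "\<And>d. d \<in> dualZ G \<Longrightarrow> \<exists>F c. finite F \<and> F \<subseteq> B \<and> d = (\<lambda>x. \<Sum>f\<in>F. of_int (c f) * f x)"
    by (rule part_of_basisE[OF pb]) blast
  obtain F m where F: "finite F" "F \<subseteq> B" "c = (\<lambda>x. \<Sum>f\<in>F. of_int (m f) * f x)" using gen[OF c] by blast
  define e where "e f = k * (if f \<in> F then m f else 0) - (if f = d1 then 1 else 0) - (if f = d2 then 1 else 0)" for f
  have "insert d1 (insert d2 F) \<inter> F = F" by auto
  hence "(\<Sum>f\<in>insert d1 (insert d2 F). of_int (e f) * f x) = of_int k * c x - d1 x - d2 x" for x
    unfolding e_def F(3) using F(1)
    by (simp add: ring_distribs sum_subtractf sum_indicator_apply sum_distrib_left[symmetric] mult.assoc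
        if_distrib[of "\<lambda>t. of_int t * _"] sum.If_cases cong: if_cong)
  also have "\<dots> x = 0" for x using fun_cong[OF eq, of x] by simp
  finally have "e d1 = 0" using indep[of "insert d1 (insert d2 F)" e] F B d by auto
  hence "1 = k * (if d1 \<in> F then m d1 else 0)" unfolding e_def using d(3) by simp
  thus ?thesis by (rule dvdI)
qed

lemma part_of_basis_sum_eq:
  fixes G :: "(real^'n) set" and d d' d1 d2 :: "real^'n \<Rightarrow> real"
  assumes pb: "part_of_basis G E" and d: "d \<in> E" "d' \<in> E" "d1 \<in> E" "d2 \<in> E"
    and eq: "(\<lambda>x. d x + d' x) = (\<lambda>x. d1 x + d2 x)"
  shows "d \<in> {d1, d2}"
proof (rule ccontr)
  assume "d \<notin> {d1, d2}"
  obtain B where B: "E \<subseteq> B"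
    and indep: "\<And>F c. finite F \<Longrightarrow> F \<subseteq> B \<Longrightarrow> (\<forall>x. (\<Sum>f\<in>F. of_int (c f) * f x) = 0) \<Longrightarrow> \<forall>f\<in>F. c f = 0"
    by (rule part_of_basisE[OF pb]) blast
  define e :: "((real^'n) \<Rightarrow> real) \<Rightarrow> int" where
    "e f = (if f = d then 1 else 0) + (if f = d' then 1 else 0) - (if f = d1 then 1 else 0) - (if f = d2 then 1 else 0)" for f
  have "(\<Sum>f\<in>{d, d', d1, d2}. of_int (e f) * f x) = d x + d' x - d1 x - d2 x" for x
    unfolding e_def by (simp add: ring_distribs sum.distrib sum_subtractf sum_indicator_apply)
  also have "\<dots> x = 0" for x using fun_cong[OF eq, of x] by simp
  finally have "e d = 0" using indep[of "{d, d', d1, d2}" e] B d by auto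
  thus False using \<open>d \<notin> {d1, d2}\<close> unfolding e_def by (auto split: if_splits)
qed

lemma refl_inner: "v \<bullet> refl a c y = (v - (v \<bullet> a) *\<^sub>R c) \<bullet> y"
  unfolding refl_def by (simp add: inner_diff_left inner_diff_right inner_commute)

lemma refl_refl: "c \<bullet> a = 2 \<Longrightarrow> refl a c (refl a c x) = x"
  unfolding refl_def by (simp add: inner_diff_right algebra_simps)

lemma refl_add: "refl a c (x + y) = refl a c x + refl a c y"
  unfolding refl_def by (simp add: inner_add_right algebra_simps)

lemma refl_image_kernel:
  assumes "c \<bullet> a = 2"
  shows "refl a c ` {x. v \<bullet> x = 0} = {y. (v - (v \<bullet> a) *\<^sub>R c) \<bullet> y = 0}"
proof
  show "refl a c ` {x. v \<bullet> x = 0} \<subseteq> {y. (v - (v \<bullet> a) *\<^sub>R c) \<bullet> y = 0}"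
  proof clarify
    fix x assume "v \<bullet> x = 0"
    thus "(v - (v \<bullet> a) *\<^sub>R c) \<bullet> refl a c x = 0"
      using refl_inner[of v a c "refl a c x"] refl_refl[OF assms] by simp
  qed
  show "{y. (v - (v \<bullet> a) *\<^sub>R c) \<bullet> y = 0} \<subseteq> refl a c ` {x. v \<bullet> x = 0}"
  proof
    fix y assume "y \<in> {y. (v - (v \<bullet> a) *\<^sub>R c) \<bullet> y = 0}"
    hence "v \<bullet> refl a c y = 0" using refl_inner[of v a c y] by simp
    moreover have "y = refl a c (refl a c y)" using refl_refl[OF assms] by simp
    ultimately show "y \<in> refl a c ` {x. v \<bullet> x = 0}" by blast
  qed
qed

section \<open>The dual cone of a finitely generated full-rank monoid\<close>

locale lattice_monoid =
  fixes G H :: "(real^'n) set"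
  assumes finite_gens: "finite H"
    and monoid_gen: "G = {x. \<exists>c::(real^'n)\<Rightarrow>nat. x = (\<Sum>h\<in>H. of_nat (c h) *\<^sub>R h)}"
    and G_lattice: "G \<subseteq> lattice"
    and span_ZG: "span (ZG G) = UNIV"
begin

lemma ZG_lattice: "ZG G \<subseteq> lattice"
  using ZG_subset_lattice[OF G_lattice] .

lemma gens_subset: "H \<subseteq> G"
proof
  fix h assume h: "h \<in> H"
  have "(\<Sum>h'\<in>H. of_nat (if h' = h then 1 else 0) *\<^sub>R h') = h"
    using h finite_gens by (simp add: if_distrib[of "\<lambda>t. of_nat t *\<^sub>R _"] sum.delta cong: if_cong)
  thus "h \<in> G" unfolding monoid_gen by (intro CollectI exI[of _ "\<lambda>h'. if h' = h then 1 else 0"]) simp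
qed

lemma gens_ZG: "H \<subseteq> ZG G"
  using gens_subset subset_ZG by blast

lemma gens_rat_vec: "h \<in> H \<Longrightarrow> rat_vec h"
  using gens_ZG ZG_lattice lattice_imp_rat_vec by blast

lemma span_gens: "span H = UNIV"
proof -
  have "G \<subseteq> span H" unfolding monoid_gen by (auto intro: sum_scaleR_in_span)
  hence "ZG G \<subseteq> span H" using ZG_subset_span span_mono[of G "span H"] by (auto simp: span_span)
  thus ?thesis using span_ZG span_mono[of "ZG G" "span H"] by (auto simp: span_span)
qed

lemma eq_zero_if_orthogonal:
  assumes "\<forall>x\<in>A. v \<bullet> x = 0" "span A = UNIV" shows "v = 0"
  using inner_eq_zero_on_span[of v A v] assms by auto

lemma restr_inj: assumes "restr G v = restr G w" shows "v = w"
proof -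
  have "v \<bullet> x = w \<bullet> x" if "x \<in> ZG G" for x using fun_cong[OF assms, of x] that by (simp add: restr_def)
  hence "\<forall>x\<in>ZG G. (v - w) \<bullet> x = 0" by (simp add: inner_diff_left)
  from eq_zero_if_orthogonal[OF this span_ZG] show ?thesis by simp
qed

lemma restr_nonzero: assumes "v \<noteq> 0" shows "restr G v \<noteq> (\<lambda>_. 0)"
proof
  assume "restr G v = (\<lambda>_. 0)"
  hence "restr G v = restr G 0" unfolding restr_def by auto
  thus False using restr_inj assms by blast
qed

text \<open>The vector is assembled from the rational dual basis of a basis of \<open>\<int>\<Gamma>\<close>.\<close>
lemma homQ_eq_restr:
  assumes f: "f \<in> homQ G"
  shows "\<exists>v. rat_vec v \<and> f = restr G v"
proof -
  obtain B where B: "B \<subseteq> ZG G" "independent B" "ZG G \<subseteq> span B"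
    by (rule basis_exists)
  have finB: "finite B" using B(2) by (simp add: finiteI_independent)
  have "\<forall>b\<in>B. rat_vec b" using B(1) ZG_lattice lattice_imp_rat_vec by auto
  hence "\<forall>b\<in>B. \<exists>w. rat_vec w \<and> (\<forall>b'\<in>B-{b}. b' \<bullet> w = 0) \<and> w \<bullet> b = 1"
    using rat_dual_vector[OF finB _ B(2)] by blast
  then obtain W where W: "\<And>b. b \<in> B \<Longrightarrow> rat_vec (W b) \<and> (\<forall>b'\<in>B-{b}. b' \<bullet> W b = 0) \<and> W b \<bullet> b = 1"
    by metis
  define v where "v = (\<Sum>b\<in>B. f b *\<^sub>R W b)"
  have "rat_vec v" unfolding v_def using W f B(1) unfolding homQ_def by (auto intro!: rat_vec_sum rat_vec_scaleR)
  moreover have "f x = v \<bullet> x" if x: "x \<in> ZG G" for x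
  proof -
    obtain r where r: "x = (\<Sum>b\<in>B. r b *\<^sub>R b)" using x B(3) span_finite[OF finB] by auto
    have coord: "W b \<bullet> x = r b" if "b \<in> B" for b
    proof -
      have "W b \<bullet> x = (\<Sum>b'\<in>B. r b' * (W b \<bullet> b'))" unfolding r by (simp add: inner_sum_right)
      also have "\<dots> = (\<Sum>b'\<in>B. if b' = b then r b' else 0)"
        using W[OF that] by (intro sum.cong) (auto simp: inner_commute)
      finally show ?thesis using finB that by simp
    qed
    have "rat_vec x" using x ZG_lattice lattice_imp_rat_vec by blast
    hence "\<forall>b\<in>B. r b \<in> \<rat>" using coord W rat_vec_inner by metis
    hence "f x = (\<Sum>b\<in>B. r b * f b)" by (rule homQ_rat_combination[OF f finB B(1) x _ r])
    also have "\<dots> = v \<bullet> x" unfolding v_def using coord by (simp add: inner_sum_left mult.commute)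
    finally show ?thesis .
  qed
  moreover have "f x = 0" if "x \<notin> ZG G" for x using f that unfolding homQ_def by auto
  ultimately show ?thesis unfolding restr_def by (intro exI[of _ v]) auto
qed

definition dual_nonneg :: "real^'n \<Rightarrow> bool" where
  "dual_nonneg v \<longleftrightarrow> (\<forall>g\<in>G. 0 \<le> v \<bullet> g)"

definition pos_gens :: "real^'n \<Rightarrow> (real^'n) set" where
  "pos_gens v = {h\<in>H. 0 < v \<bullet> h}"

definition zero_gens :: "real^'n \<Rightarrow> (real^'n) set" where
  "zero_gens v = {h\<in>H. v \<bullet> h = 0}"

lemma dual_nonneg_iff_gens: "dual_nonneg v \<longleftrightarrow> (\<forall>h\<in>H. 0 \<le> v \<bullet> h)"
  unfolding dual_nonneg_def using gens_subset
  by (auto simp: monoid_gen inner_sum_right intro!: sum_nonneg)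

lemma finite_pos_gens: "finite (pos_gens v)"
  using finite_gens unfolding pos_gens_def by auto

lemma finite_zero_gens: "finite (zero_gens v)"
  using finite_gens unfolding zero_gens_def by auto

lemma restr_in_dual_cone: "rat_vec v \<Longrightarrow> dual_nonneg v \<Longrightarrow> restr G v \<in> dual_cone G"
  using restr_in_homQ[OF _ G_lattice]
  unfolding dual_cone_def dual_nonneg_def restr_def by (simp add: subset_ZG[THEN subsetD])

lemma dual_cone_eq_restr:
  assumes "f \<in> dual_cone G" shows "\<exists>v. rat_vec v \<and> dual_nonneg v \<and> f = restr G v"
proof -
  obtain v where v: "rat_vec v" "f = restr G v" using homQ_eq_restr assms unfolding dual_cone_def by blast
  have "dual_nonneg v"
    using assms unfolding v(2) dual_cone_def dual_nonneg_def restr_def by (simp add: subset_ZG[THEN subsetD])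
  thus ?thesis using v by auto
qed

lemma pos_gens_nonempty: "dual_nonneg v \<Longrightarrow> v \<noteq> 0 \<Longrightarrow> pos_gens v \<noteq> {}"
  using eq_zero_if_orthogonal[OF _ span_gens, of v]
  unfolding pos_gens_def dual_nonneg_iff_gens by force

lemma pos_gens_subset:
  assumes "dual_nonneg v" "\<forall>h\<in>zero_gens v. x \<bullet> h = 0"
  shows "pos_gens x \<subseteq> pos_gens v"
  using assms unfolding pos_gens_def zero_gens_def dual_nonneg_iff_gens by force

lemma subset_QG: "G \<subseteq> QG G"
  unfolding QG_def by (auto intro!: exI[of _ "{_}"] exI[of _ "\<lambda>_. 1"])

lemma QG_nonneg: assumes "dual_nonneg v" "x \<in> QG G" shows "0 \<le> v \<bullet> x"
proof -
  obtain F c where F: "F \<subseteq> G" "\<forall>g\<in>F. c g \<ge> 0" "x = (\<Sum>g\<in>F. c g *\<^sub>R g)"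
    using assms(2) unfolding QG_def by auto
  have "v \<bullet> x = (\<Sum>g\<in>F. c g * (v \<bullet> g))" unfolding F(3) by (simp add: inner_sum_right)
  also have "\<dots> \<ge> 0" using F assms(1) unfolding dual_nonneg_def by (intro sum_nonneg) auto
  finally show ?thesis .
qed

lemma dim_QG: "dim (QG G) = CARD('n)"
proof -
  have "QG G \<subseteq> span G" unfolding QG_def by (auto intro: sum_scaleR_in_span)
  hence "span (QG G) = span G" using subset_QG by (simp add: span_eq span_base subset_iff)
  also have "\<dots> = UNIV" using span_ZG ZG_subset_span span_mono[of "ZG G" "span G"] by (auto simp: span_span)
  finally show ?thesis using dim_eq_full[of "QG G"] by simp
qed

lemma nonneg_combination_in_span_zero:
  assumes "finite F" "\<forall>g\<in>F. 0 \<le> c g \<and> 0 \<le> v \<bullet> g" "v \<bullet> (\<Sum>g\<in>F. c g *\<^sub>R g) = 0"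
  shows "(\<Sum>g\<in>F. c g *\<^sub>R g) \<in> span {g\<in>F. v \<bullet> g = 0}"
proof -
  have "(\<Sum>g\<in>F. c g * (v \<bullet> g)) = 0" using assms(3) by (simp add: inner_sum_right)
  hence "\<forall>g\<in>F. c g * (v \<bullet> g) = 0" using assms(1,2) by (subst (asm) sum_nonneg_eq_0_iff) auto
  show ?thesis
  proof (intro span_sum)
    fix g assume "g \<in> F"
    thus "c g *\<^sub>R g \<in> span {g\<in>F. v \<bullet> g = 0}"
      using \<open>\<forall>g\<in>F. c g * (v \<bullet> g) = 0\<close> by (cases "c g = 0") (auto intro: span_scale span_base span_zero)
  qed
qed

lemma span_face: assumes "dual_nonneg v" shows "span {x \<in> QG G. v \<bullet> x = 0} = span (zero_gens v)"
proof -
  have G0: "g \<in> span (zero_gens v)" if "g \<in> G" "v \<bullet> g = 0" for g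
  proof -
    from that(1) obtain c :: "real^'n \<Rightarrow> nat" where c: "g = (\<Sum>h\<in>H. of_nat (c h) *\<^sub>R h)"
      unfolding monoid_gen by auto
    have "g \<in> span {h\<in>H. v \<bullet> h = 0}" unfolding c using assms that(2) finite_gens
      by (intro nonneg_combination_in_span_zero) (auto simp: c dual_nonneg_iff_gens)
    thus ?thesis unfolding zero_gens_def .
  qed
  have "x \<in> span (zero_gens v)" if x: "x \<in> QG G" "v \<bullet> x = 0" for x
  proof -
    obtain F c where F: "finite F" "F \<subseteq> G" "\<forall>g\<in>F. c g \<in> \<rat> \<and> c g \<ge> 0" "x = (\<Sum>g\<in>F. c g *\<^sub>R g)"
      using x(1) unfolding QG_def by auto
    have "x \<in> span {g\<in>F. v \<bullet> g = 0}" unfolding F(4) using F x(2) assms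
      by (intro nonneg_combination_in_span_zero) (auto simp: dual_nonneg_def)
    moreover have "{g\<in>F. v \<bullet> g = 0} \<subseteq> span (zero_gens v)" using G0 F(2) by auto
    ultimately show ?thesis using span_mono[of "{g\<in>F. v \<bullet> g = 0}" "span (zero_gens v)"] by (auto simp: span_span)
  qed
  moreover have "zero_gens v \<subseteq> {x \<in> QG G. v \<bullet> x = 0}"
    using gens_subset subset_QG unfolding zero_gens_def by auto
  ultimately show ?thesis by (intro span_eq[THEN iffD2]) (auto intro: span_base)
qed

lemma dim_kernel: "(v::real^'n) \<noteq> 0 \<Longrightarrow> dim {x. v \<bullet> x = 0} = CARD('n) - 1"
  using dim_hyperplane[of v] by simp

lemma span_zero_gens_eq_kernel:
  assumes "v \<noteq> 0" "CARD('n) - 1 \<le> dim (zero_gens v)"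
  shows "span (zero_gens v) = {x. v \<bullet> x = 0}"
proof -
  have "span (zero_gens v) \<subseteq> {x. v \<bullet> x = 0}"
    by (rule span_minimal) (auto simp: zero_gens_def subspace_hyperplane)
  thus ?thesis using dim_kernel[OF assms(1)] assms(2)
    by (intro subspace_dim_equal) (auto simp: subspace_hyperplane)
qed

lemma multiple_if_vanishing_on_zero_gens:
  assumes v: "rat_vec v" "dual_nonneg v" "v \<noteq> 0" "CARD('n) - 1 \<le> dim (zero_gens v)"
    and w: "rat_vec w" "dual_nonneg w" "\<forall>h\<in>zero_gens v. w \<bullet> h = 0"
  shows "\<exists>t. t \<in> \<rat> \<and> t \<ge> 0 \<and> w = t *\<^sub>R v"
proof -
  have "w \<bullet> x = 0" if "v \<bullet> x = 0" for x
    using that w(3) span_zero_gens_eq_kernel[OF v(3,4)] inner_eq_zero_on_span[of x "zero_gens v" w] by auto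
  then obtain t where t: "w = t *\<^sub>R v" using kernel_subset_imp_multiple by blast
  obtain h where h: "h \<in> H" "0 < v \<bullet> h" using pos_gens_nonempty[OF v(2,3)] unfolding pos_gens_def by auto
  have "t = (w \<bullet> h) / (v \<bullet> h)" using t h by simp
  moreover have "w \<bullet> h \<in> \<rat>" "v \<bullet> h \<in> \<rat>" using v(1) w(1) gens_rat_vec[OF h(1)] rat_vec_inner by auto
  moreover have "0 \<le> w \<bullet> h" using w(2) h(1) dual_nonneg_iff_gens by auto
  ultimately have "t \<in> \<rat>" "t \<ge> 0" using h(2) by auto
  thus ?thesis using t by blast
qed

lemma exists_rat_vec_vanishing_on_zero_gens:
  assumes v: "v \<noteq> 0" "dim (zero_gens v) < CARD('n) - 1"
  shows "\<exists>u. rat_vec u \<and> (\<forall>h\<in>zero_gens v. u \<bullet> h = 0) \<and> (\<forall>t. u \<noteq> t *\<^sub>R v)"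
proof (rule ccontr)
  assume none: "\<not> ?thesis"
  let ?W = "{w. \<forall>a\<in>zero_gens v. a \<bullet> w = 0}"
  let ?R = "{w. rat_vec w \<and> (\<forall>a\<in>zero_gens v. a \<bullet> w = 0)}"
  have "?W \<subseteq> span ?R"
    using orthogonal_complement_span_rat[OF finite_zero_gens] gens_rat_vec unfolding zero_gens_def by auto
  moreover have "?R \<subseteq> span {v}"
  proof
    fix r assume "r \<in> ?R"
    hence "rat_vec r" "\<forall>h\<in>zero_gens v. r \<bullet> h = 0" by (auto simp: inner_commute)
    then obtain t where "r = t *\<^sub>R v" using none by blast
    thus "r \<in> span {v}" by (simp add: span_base span_scale)
  qed
  ultimately have W_v: "?W \<subseteq> span {v}" using span_mono[of ?R "span {v}"] by (auto simp: span_span)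
  have "{x. v \<bullet> x = 0} \<subseteq> span (zero_gens v)"
  proof
    fix x assume x: "x \<in> {x. v \<bullet> x = 0}"
    obtain y z where yz: "y \<in> span (zero_gens v)" "\<And>w. w \<in> span (zero_gens v) \<Longrightarrow> orthogonal z w" "x = y + z"
      by (rule orthogonal_subspace_decomp_exists[of "zero_gens v" x]) blast
    have "z \<in> ?W" using yz(2) by (auto simp: orthogonal_def inner_commute span_base)
    then obtain k where k: "z = k *\<^sub>R v" using W_v by (auto simp: span_singleton)
    have "v \<bullet> y = 0" using yz(1) inner_eq_zero_on_span[of y "zero_gens v" v] unfolding zero_gens_def
      by (auto simp: inner_commute)
    hence "k * (v \<bullet> v) = 0" using x yz(3) k by (simp add: inner_add_right)
    hence "k = 0" using v(1) by simp
    thus "x \<in> span (zero_gens v)" using yz k by simp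
  qed
  from dim_subset[OF this] show False using dim_kernel[OF v(1)] v(2) by simp
qed

text \<open>\<open>c\<close> is the minimum of \<open>(q \<bullet> h) / (p \<bullet> h)\<close> over the generators \<open>h\<close> where \<open>p\<close> is positive.\<close>
lemma min_ratio_shift:
  assumes p: "dual_nonneg p" "rat_vec p" "pos_gens p \<noteq> {}"
    and q: "rat_vec q" "\<forall>h\<in>H. p \<bullet> h = 0 \<longrightarrow> 0 \<le> q \<bullet> h"
  obtains c h where "c \<in> \<rat>" "h \<in> pos_gens p" "dual_nonneg (q - c *\<^sub>R p)" "(q - c *\<^sub>R p) \<bullet> h = 0"
proof -
  define ratio where "ratio h = (q \<bullet> h) / (p \<bullet> h)" for h
  define c where "c = Min (ratio ` pos_gens p)"
  have "c \<in> ratio ` pos_gens p" unfolding c_def using finite_pos_gens p(3) by (intro Min_in) auto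
  then obtain h where h: "h \<in> pos_gens p" "c = ratio h" by auto
  have "c \<in> \<rat>" using h p(2) q(1) gens_rat_vec unfolding ratio_def pos_gens_def
    by (auto intro!: Rats_divide rat_vec_inner)
  moreover have "dual_nonneg (q - c *\<^sub>R p)" unfolding dual_nonneg_iff_gens
  proof
    fix h' assume h': "h' \<in> H"
    show "0 \<le> (q - c *\<^sub>R p) \<bullet> h'"
    proof (cases "0 < p \<bullet> h'")
      case True
      hence "c \<le> ratio h'" unfolding c_def using h' finite_pos_gens by (auto simp: pos_gens_def)
      thus ?thesis using True unfolding ratio_def by (simp add: le_divide_eq inner_diff_left)
    next
      case False
      hence "p \<bullet> h' = 0" using p(1) h' dual_nonneg_iff_gens by force
      thus ?thesis using q(2) h' by (simp add: inner_diff_left)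
    qed
  qed
  moreover have "(q - c *\<^sub>R p) \<bullet> h = 0"
    using h unfolding ratio_def pos_gens_def by (simp add: inner_diff_left)
  ultimately show ?thesis using that h(1) by blast
qed

lemma exists_dual_nonneg_fewer_pos_gens:
  assumes v: "rat_vec v" "dual_nonneg v" "v \<noteq> 0" "dim (zero_gens v) < CARD('n) - 1"
  shows "\<exists>w. rat_vec w \<and> dual_nonneg w \<and> (\<forall>h\<in>zero_gens v. w \<bullet> h = 0) \<and> (\<forall>s. w \<noteq> s *\<^sub>R v) \<and>
    card (pos_gens w) < card (pos_gens v)"
proof -
  obtain u where u: "rat_vec u" "\<forall>h\<in>zero_gens v. u \<bullet> h = 0" "\<forall>t. u \<noteq> t *\<^sub>R v"
    using exists_rat_vec_vanishing_on_zero_gens[OF v(3,4)] by auto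
  obtain c h1 where c: "c \<in> \<rat>" "h1 \<in> pos_gens v" "dual_nonneg (u - c *\<^sub>R v)" "(u - c *\<^sub>R v) \<bullet> h1 = 0"
    by (rule min_ratio_shift[OF v(2,1) pos_gens_nonempty[OF v(2,3)] u(1)])
      (use u(2) in \<open>auto simp: zero_gens_def\<close>)
  define w where "w = u - c *\<^sub>R v"
  have w_zero: "\<forall>h\<in>zero_gens v. w \<bullet> h = 0"
    using u(2) unfolding w_def zero_gens_def by (simp add: inner_diff_left)
  have "h1 \<notin> pos_gens w" using c(4) unfolding w_def pos_gens_def by auto
  hence "card (pos_gens w) < card (pos_gens v)"
    using pos_gens_subset[OF v(2) w_zero] c(2) finite_pos_gens by (intro psubset_card_mono) auto
  moreover have "w \<noteq> s *\<^sub>R v" for s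
    using u(3)[rule_format, of "s + c"] unfolding w_def by (auto simp: algebra_simps)
  moreover have "rat_vec w" "dual_nonneg w"
    using u(1) v(1) c(1,3) unfolding w_def by (auto intro!: rat_vec_diff rat_vec_scaleR)
  ultimately show ?thesis using w_zero by blast
qed

text \<open>\<open>w1\<close> is the largest multiple of the vector given by \<open>exists_dual_nonneg_fewer_pos_gens\<close>
  that can be subtracted from \<open>v\<close> keeping it nonnegative.\<close>
lemma dual_nonneg_split:
  assumes v: "rat_vec v" "dual_nonneg v" "v \<noteq> 0" "dim (zero_gens v) < CARD('n) - 1"
  shows "\<exists>w1 w2. rat_vec w1 \<and> rat_vec w2 \<and> dual_nonneg w1 \<and> dual_nonneg w2 \<and> v = w1 + w2 \<and>
     card (pos_gens w1) < card (pos_gens v) \<and> card (pos_gens w2) < card (pos_gens v) \<and>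
     (\<forall>t. w1 \<noteq> t *\<^sub>R v)"
proof -
  obtain w where w: "rat_vec w" "dual_nonneg w" "\<forall>h\<in>zero_gens v. w \<bullet> h = 0" "\<forall>s. w \<noteq> s *\<^sub>R v"
      "card (pos_gens w) < card (pos_gens v)"
    using exists_dual_nonneg_fewer_pos_gens[OF v] by blast
  have pos_w: "pos_gens w \<subseteq> pos_gens v" using pos_gens_subset[OF v(2) w(3)] .
  have "w \<noteq> 0" using w(4) by (metis scale_zero_left)
  have "\<forall>h\<in>H. 0 \<le> v \<bullet> h" using v(2) dual_nonneg_iff_gens by blast
  then obtain t h2 where t: "t \<in> \<rat>" "h2 \<in> pos_gens w" "dual_nonneg (v - t *\<^sub>R w)" "(v - t *\<^sub>R w) \<bullet> h2 = 0"
    using min_ratio_shift[OF w(2,1) pos_gens_nonempty[OF w(2) \<open>w \<noteq> 0\<close>] v(1)] by blast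
  have "0 < w \<bullet> h2" "h2 \<in> pos_gens v" using t(2) pos_w by (auto simp: pos_gens_def)
  moreover have "v \<bullet> h2 = t * (w \<bullet> h2)" using t(4) by (simp add: inner_diff_left)
  ultimately have "t > 0" using zero_less_mult_pos2[of t "w \<bullet> h2"] by (simp add: pos_gens_def)
  define w1 where "w1 = t *\<^sub>R w"
  define w2 where "w2 = v - t *\<^sub>R w"
  have "pos_gens w1 = pos_gens w" unfolding w1_def pos_gens_def using \<open>t > 0\<close> by (auto simp: zero_less_mult_iff)
  hence card_w1: "card (pos_gens w1) < card (pos_gens v)" using w(5) by simp
  have "pos_gens w2 \<subseteq> pos_gens v"
    using pos_gens_subset[OF v(2)] w(3) unfolding w2_def zero_gens_def by (simp add: inner_diff_left)
  moreover have "h2 \<notin> pos_gens w2" using t(4) unfolding w2_def pos_gens_def by auto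
  ultimately have card_w2: "card (pos_gens w2) < card (pos_gens v)"
    using \<open>h2 \<in> pos_gens v\<close> finite_pos_gens by (intro psubset_card_mono) auto
  have "w1 \<noteq> s *\<^sub>R v" for s
  proof
    assume "w1 = s *\<^sub>R v"
    hence "(1 / t) *\<^sub>R w1 = (s / t) *\<^sub>R v" by simp
    thus False using w(4) \<open>t > 0\<close> unfolding w1_def by simp
  qed
  moreover have "dual_nonneg w1" using w(2) \<open>t > 0\<close> unfolding w1_def dual_nonneg_def by simp
  moreover have "rat_vec w1" "rat_vec w2" unfolding w1_def w2_def using t(1) w(1) v(1)
    by (auto intro!: rat_vec_scaleR rat_vec_diff)
  moreover have "v = w1 + w2" unfolding w1_def w2_def by simp
  ultimately show ?thesis using t(3) card_w1 card_w2 unfolding w2_def by blast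
qed

lemma dim_zero_gens_if_extremal:
  assumes v: "rat_vec v" "dual_nonneg v" "v \<noteq> 0" and ext: "extremal_ray_gen (dual_cone G) (restr G v)"
  shows "CARD('n) - 1 \<le> dim (zero_gens v)"
proof (rule ccontr)
  assume "\<not> ?thesis"
  then obtain w1 w2 where w: "rat_vec w1" "rat_vec w2" "dual_nonneg w1" "dual_nonneg w2" "v = w1 + w2"
    "\<forall>t. w1 \<noteq> t *\<^sub>R v"
    using dual_nonneg_split[OF v] by auto
  have "restr G v = (\<lambda>x. restr G w1 x + restr G w2 x)" unfolding w(5) restr_add ..
  moreover have "restr G w1 \<in> dual_cone G" "restr G w2 \<in> dual_cone G" using restr_in_dual_cone w by auto
  ultimately obtain t where "restr G w1 = (\<lambda>x. t * restr G v x)"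
    using extremal_ray_genD[OF ext] by blast
  hence "w1 = t *\<^sub>R v" unfolding restr_scaleR[symmetric] by (rule restr_inj)
  thus False using w(6) by auto
qed

lemma extremal_if_dim_zero_gens:
  assumes v: "rat_vec v" "dual_nonneg v" "v \<noteq> 0" and dim: "CARD('n) - 1 \<le> dim (zero_gens v)"
  shows "extremal_ray_gen (dual_cone G) (restr G v)"
  unfolding extremal_ray_gen_def
proof (intro conjI ballI impI)
  show "restr G v \<in> dual_cone G" using restr_in_dual_cone v by auto
  show "restr G v \<noteq> (\<lambda>_. 0)" using restr_nonzero v by auto
  fix a b assume ab: "a \<in> dual_cone G" "b \<in> dual_cone G" "restr G v = (\<lambda>x. a x + b x)"
  obtain va where va: "rat_vec va" "dual_nonneg va" "a = restr G va" using dual_cone_eq_restr ab by blast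
  obtain vb where vb: "rat_vec vb" "dual_nonneg vb" "b = restr G vb" using dual_cone_eq_restr ab by blast
  have "va \<bullet> h = 0 \<and> vb \<bullet> h = 0" if "h \<in> zero_gens v" for h
  proof -
    have h: "h \<in> ZG G" "h \<in> H" "v \<bullet> h = 0" using that gens_ZG unfolding zero_gens_def by auto
    have "v \<bullet> h = va \<bullet> h + vb \<bullet> h" using fun_cong[OF ab(3), of h] h unfolding va vb restr_def by simp
    moreover have "0 \<le> va \<bullet> h" "0 \<le> vb \<bullet> h" using va vb h dual_nonneg_iff_gens by auto
    ultimately show ?thesis using h(3) by linarith
  qed
  then obtain ta tb where "ta \<in> \<rat>" "ta \<ge> 0" "va = ta *\<^sub>R v" "tb \<in> \<rat>" "tb \<ge> 0" "vb = tb *\<^sub>R v"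
    using multiple_if_vanishing_on_zero_gens[OF v dim] va(1,2) vb(1,2) by (metis (no_types, lifting))
  thus "\<exists>t. t \<in> \<rat> \<and> 0 \<le> t \<and> a = (\<lambda>x. t * restr G v x)"
    "\<exists>t. t \<in> \<rat> \<and> 0 \<le> t \<and> b = (\<lambda>x. t * restr G v x)"
    unfolding va(3) vb(3) by (auto simp: restr_scaleR)
qed

lemma extremal_rescale_EG:
  assumes v: "rat_vec v" "v \<noteq> 0" "extremal_ray_gen (dual_cone G) (restr G v)"
  shows "\<exists>c. c > 0 \<and> c \<in> \<rat> \<and> restr G (c *\<^sub>R v) \<in> EG G"
proof -
  obtain N :: int where N: "N > 0" "\<forall>i\<in>UNIV. of_int N * v $ i \<in> \<int>"
    using rat_common_denominator[of UNIV "\<lambda>i. v $ i"] v(1) unfolding rat_vec_def by auto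
  define vN where "vN = of_int N *\<^sub>R v"
  have "vN \<in> lattice" unfolding vN_def lattice_def using N by auto
  hence fZ: "restr G vN \<in> dualZ G" by (rule restr_in_dualZ[OF _ G_lattice])
  have "vN \<noteq> 0" unfolding vN_def using N v(2) by simp
  obtain d k where dk: "primitive G d" "k > 0" "restr G vN = (\<lambda>x. of_int k * d x)"
  proof -
    obtain d k where dk: "primitive G d" "k \<noteq> 0" "restr G vN = (\<lambda>x. of_int k * d x)"
      using dualZ_eq_multiple_primitive[OF fZ restr_nonzero[OF \<open>vN \<noteq> 0\<close>]] by blast
    show ?thesis
    proof (cases "k > 0")
      case True then show ?thesis using that dk by blast
    next
      case False
      have "restr G vN = (\<lambda>x. of_int (- k) * - d x)" using dk(3) by simp
      then show ?thesis using False dk(2) by (intro that[OF primitive_neg[OF dk(1)], of "- k"]) auto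
    qed
  qed
  define c where "c = of_int N / (of_int k :: real)"
  have c: "c > 0" "c \<in> \<rat>" unfolding c_def using N dk(2) by auto
  have "restr G (c *\<^sub>R v) = d"
    using dk(2,3) unfolding c_def vN_def restr_scaleR by (auto simp: fun_eq_iff field_simps)
  moreover have "extremal_ray_gen (dual_cone G) (restr G (c *\<^sub>R v))"
    unfolding restr_scaleR using extremal_ray_gen_scale[OF v(3) c(2,1)] .
  ultimately show ?thesis using c dk(1) unfolding EG_def by auto
qed

lemma EG_eq_restr:
  assumes "d \<in> EG G"
  shows "\<exists>v. rat_vec v \<and> dual_nonneg v \<and> v \<noteq> 0 \<and> d = restr G v \<and> CARD('n) - 1 \<le> dim (zero_gens v)"
proof -
  have ext: "extremal_ray_gen (dual_cone G) d" using assms unfolding EG_def by auto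
  hence "d \<in> dual_cone G" "d \<noteq> (\<lambda>_. 0)" unfolding extremal_ray_gen_def by auto
  then obtain v where v: "rat_vec v" "dual_nonneg v" "d = restr G v" using dual_cone_eq_restr by blast
  have "v \<noteq> 0" using \<open>d \<noteq> _\<close> v(3) unfolding restr_def by auto
  thus ?thesis using v dim_zero_gens_if_extremal[OF v(1,2)] ext by blast
qed

text \<open>Split the functional until its zero generators span a hyperplane; each split decreases the
  number of positive generators.\<close>
lemma exists_EG_nonzero:
  assumes "x \<in> ZG G" "rat_vec v" "dual_nonneg v" "v \<bullet> x \<noteq> 0"
  shows "\<exists>d\<in>EG G. d x \<noteq> 0"
  using assms(2-4)
proof (induction "card (pos_gens v)" arbitrary: v rule: less_induct)
  case less
  have "v \<noteq> 0" using less.prems(3) by auto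
  show ?case
  proof (cases "CARD('n) - 1 \<le> dim (zero_gens v)")
    case True
    then obtain c where c: "c > 0" "restr G (c *\<^sub>R v) \<in> EG G"
      using extremal_rescale_EG extremal_if_dim_zero_gens less.prems \<open>v \<noteq> 0\<close> by blast
    have "restr G (c *\<^sub>R v) x \<noteq> 0" using assms(1) c(1) less.prems(3) unfolding restr_def by simp
    thus ?thesis using c(2) by blast
  next
    case False
    then obtain w1 w2 where w: "rat_vec w1" "rat_vec w2" "dual_nonneg w1" "dual_nonneg w2" "v = w1 + w2"
        "card (pos_gens w1) < card (pos_gens v)" "card (pos_gens w2) < card (pos_gens v)"
      using dual_nonneg_split[OF less.prems(1,2) \<open>v \<noteq> 0\<close>] by auto
    have "w1 \<bullet> x \<noteq> 0 \<or> w2 \<bullet> x \<noteq> 0" using less.prems(3) unfolding w(5) by (auto simp: inner_add_left)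
    thus ?thesis using less.hyps w by blast
  qed
qed

lemma zero_face_is_facet:
  assumes v: "rat_vec v" "dual_nonneg v" "v \<noteq> 0" "CARD('n) - 1 \<le> dim (zero_gens v)"
  shows "is_facet (QG G) {x\<in>QG G. v \<bullet> x = 0}" "span {x\<in>QG G. v \<bullet> x = 0} = {x. v \<bullet> x = 0}"
proof -
  show sp: "span {x\<in>QG G. v \<bullet> x = 0} = {x. v \<bullet> x = 0}"
    using span_face[OF v(2)] span_zero_gens_eq_kernel[OF v(3,4)] by simp
  have "is_face (QG G) {x\<in>QG G. v \<bullet> x = 0}"
    unfolding is_face_def using v(1) QG_nonneg[OF v(2)] unfolding rat_vec_def by blast
  moreover have "dim {x\<in>QG G. v \<bullet> x = 0} = CARD('n) - 1"
    using sp dim_kernel[OF v(3)] dim_span[of "{x\<in>QG G. v \<bullet> x = 0}"] by simp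
  ultimately show "is_facet (QG G) {x\<in>QG G. v \<bullet> x = 0}"
    unfolding is_facet_def using dim_QG by (simp add: Suc_le_eq)
qed

lemma facet_normal_in_EG:
  assumes F: "is_facet (QG G) F"
  shows "\<exists>v. rat_vec v \<and> dual_nonneg v \<and> v \<noteq> 0 \<and> CARD('n) - 1 \<le> dim (zero_gens v) \<and>
             restr G v \<in> EG G \<and> span F = {x. v \<bullet> x = 0}"
proof -
  obtain u where u: "rat_vec u" "\<forall>x\<in>QG G. 0 \<le> u \<bullet> x" "F = {x\<in>QG G. u \<bullet> x = 0}"
    and dF: "dim F + 1 = dim (QG G)"
    using F unfolding is_facet_def is_face_def rat_vec_def by blast
  have Du: "dual_nonneg u" unfolding dual_nonneg_def using u(2) subset_QG by auto
  have dim_u: "CARD('n) - 1 \<le> dim (zero_gens u)"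
    using dF dim_QG span_face[OF Du] dim_span[of F] dim_span[of "zero_gens u"] u(3) by simp
  have "u \<noteq> 0" using u(3) dF by auto
  obtain c where c: "c > 0" "c \<in> \<rat>" "restr G (c *\<^sub>R u) \<in> EG G"
    using extremal_rescale_EG[OF u(1) \<open>u \<noteq> 0\<close>] extremal_if_dim_zero_gens[OF u(1) Du \<open>u \<noteq> 0\<close> dim_u] by blast
  have "zero_gens (c *\<^sub>R u) = zero_gens u" unfolding zero_gens_def using c(1) by auto
  moreover have "span F = {x. (c *\<^sub>R u) \<bullet> x = 0}"
    using span_face[OF Du] span_zero_gens_eq_kernel[OF \<open>u \<noteq> 0\<close> dim_u] u(3) c(1) by simp
  moreover have "rat_vec (c *\<^sub>R u)" "dual_nonneg (c *\<^sub>R u)" "c *\<^sub>R u \<noteq> 0"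
    using u(1) Du c(1,2) \<open>u \<noteq> 0\<close> unfolding dual_nonneg_def by (auto intro: rat_vec_scaleR)
  ultimately show ?thesis using dim_u c(3) by metis
qed

end

section \<open>The coroot of a simple root\<close>

locale reflective_root = lattice_monoid G H for G H :: "(real^'n) set" +
  fixes S :: "(real^'n) set" and cor :: "real^'n \<Rightarrow> real^'n" and a :: "real^'n"
  assumes simple_root: "a \<in> S" and root_ZG: "a \<in> ZG G"
    and coroot_lattice: "cor a \<in> lattice" and coroot_root: "cor a \<bullet> a = 2"
    and coroot_dominant: "\<forall>g\<in>G. 0 \<le> cor a \<bullet> g"
    and reflection_ZG: "refl a (cor a) ` ZG G \<subseteq> ZG G"
    and reflection_facets: "\<forall>F\<in>facet_hyperplanes (QG G). refl a (cor a) ` F \<in> facet_hyperplanes (QG G)"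
    and facets_meet_chamber: "\<forall>F. is_facet (QG G) F \<longrightarrow> F \<inter> open_chamber S cor \<noteq> {}"
    and EG_basis: "part_of_basis G (EG G)"
begin

abbreviation s :: "real^'n \<Rightarrow> real^'n" where
  "s \<equiv> refl a (cor a)"

lemma EG_primitive: "d \<in> EG G \<Longrightarrow> primitive G d"
  unfolding EG_def by auto

lemma EG_dualZ: "d \<in> EG G \<Longrightarrow> d \<in> dualZ G"
  unfolding EG_def primitive_def by auto

lemma chamber_point:
  assumes "rat_vec v" "dual_nonneg v" "v \<noteq> 0" "CARD('n) - 1 \<le> dim (zero_gens v)"
  shows "\<exists>x\<in>QG G. v \<bullet> x = 0 \<and> 0 < cor a \<bullet> x"
  using facets_meet_chamber zero_face_is_facet(1)[OF assms] simple_root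
  unfolding open_chamber_def by blast

text \<open>\<open>\<delta> \<circ> s\<close> is the restriction of \<open>v - \<langle>v,\<alpha>\<rangle>\<alpha>\<^sup>\<vee>\<close>.\<close>
lemma primitive_reflected:
  assumes "primitive G (restr G v)"
  shows "primitive G (restr G (v - (v \<bullet> a) *\<^sub>R cor a))"
proof -
  have "restr G (v - (v \<bullet> a) *\<^sub>R cor a) = (\<lambda>x. if x \<in> ZG G then restr G v (s x) else 0)"
    using reflection_ZG refl_inner[of v a "cor a"] unfolding restr_def by (auto simp: fun_eq_iff)
  moreover have "primitive G (\<lambda>x. if x \<in> ZG G then restr G v (s x) else 0)"
    by (rule primitive_comp_involution[OF assms]) (use reflection_ZG refl_refl[OF coroot_root] refl_add in auto)
  ultimately show ?thesis by simp
qed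

text \<open>The reflection maps the facet with normal \<open>v\<close> to a facet whose primitive normal \<open>v'\<close>
  is, up to sign, \<open>v - \<langle>v,\<alpha>\<rangle>\<alpha>\<^sup>\<vee>\<close>.\<close>
lemma reflected_normal:
  assumes v: "rat_vec v" "dual_nonneg v" "v \<noteq> 0" "CARD('n) - 1 \<le> dim (zero_gens v)" "restr G v \<in> EG G"
  shows "\<exists>v'. rat_vec v' \<and> dual_nonneg v' \<and> v' \<noteq> 0 \<and> CARD('n) - 1 \<le> dim (zero_gens v') \<and>
    restr G v' \<in> EG G \<and> (v - (v \<bullet> a) *\<^sub>R cor a = v' \<or> v - (v \<bullet> a) *\<^sub>R cor a = - v')"
proof -
  define w where "w = v - (v \<bullet> a) *\<^sub>R cor a"
  have "span {x\<in>QG G. v \<bullet> x = 0} \<in> facet_hyperplanes (QG G)"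
    unfolding facet_hyperplanes_def using zero_face_is_facet(1)[OF v(1-4)] by blast
  then obtain F' where F': "is_facet (QG G) F'" "s ` span {x\<in>QG G. v \<bullet> x = 0} = span F'"
    using reflection_facets unfolding facet_hyperplanes_def by blast
  obtain v' where v': "rat_vec v'" "dual_nonneg v'" "v' \<noteq> 0" "CARD('n) - 1 \<le> dim (zero_gens v')"
      "restr G v' \<in> EG G" "span F' = {x. v' \<bullet> x = 0}"
    using facet_normal_in_EG[OF F'(1)] by blast
  have "{y. w \<bullet> y = 0} = {y. v' \<bullet> y = 0}"
    using F'(2) v'(6) zero_face_is_facet(2)[OF v(1-4)] refl_image_kernel[OF coroot_root, of v]
    unfolding w_def by simp
  then obtain l where l: "w = l *\<^sub>R v'" using kernel_subset_imp_multiple[of v' w] by blast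
  obtain x0 where x0: "x0 \<in> ZG G" "v' \<bullet> x0 \<noteq> 0" using eq_zero_if_orthogonal[OF _ span_ZG] v'(3) by blast
  have "v \<bullet> x0 \<in> \<int>" "v \<bullet> a \<in> \<int>" "v' \<bullet> x0 \<in> \<int>"
    using x0(1) root_ZG restr_dualZ_Ints EG_dualZ[OF v(5)] EG_dualZ[OF v'(5)] by auto
  moreover have "cor a \<bullet> x0 \<in> \<int>" using x0(1) coroot_lattice ZG_lattice lattice_inner_Ints by blast
  ultimately have "w \<bullet> x0 \<in> \<int>" "v' \<bullet> x0 \<in> \<int>" unfolding w_def by (auto simp: inner_diff_left)
  moreover have "l = (w \<bullet> x0) / (v' \<bullet> x0)" using l x0(2) by simp
  ultimately have "l \<in> \<rat>" using Ints_subset_Rats by (auto intro!: Rats_divide)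
  moreover have "restr G w = (\<lambda>x. l * restr G v' x)" unfolding l restr_scaleR ..
  ultimately have "l = 1 \<or> l = -1"
    using primitive_rat_multiple primitive_reflected EG_primitive v(5) v'(5) unfolding w_def by blast
  thus ?thesis using l v' unfolding w_def by auto
qed

text \<open>Evaluating at points of the two facets lying in the open chamber, where \<open>\<alpha>\<^sup>\<vee>\<close> is
  positive, rules out \<open>\<delta> \<circ> s = \<delta>'\<close> and shows \<open>\<langle>\<delta>,\<alpha>\<rangle> > 0\<close>.\<close>
lemma EG_coroot_multiple:
  assumes d: "d \<in> EG G" "d a \<noteq> 0"
  shows "0 < d a \<and> (\<exists>d'\<in>EG G. d' \<noteq> d \<and> (\<lambda>x. d a * restr G (cor a) x) = (\<lambda>x. d x + d' x))"
proof -
  obtain v where v: "rat_vec v" "dual_nonneg v" "v \<noteq> 0" "d = restr G v" "CARD('n) - 1 \<le> dim (zero_gens v)"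
    using EG_eq_restr[OF d(1)] by blast
  define k where "k = v \<bullet> a"
  have da: "d a = k" using root_ZG unfolding v(4) k_def restr_def by simp
  obtain v' where v': "rat_vec v'" "dual_nonneg v'" "v' \<noteq> 0" "CARD('n) - 1 \<le> dim (zero_gens v')"
      "restr G v' \<in> EG G" "v - k *\<^sub>R cor a = v' \<or> v - k *\<^sub>R cor a = - v'"
    using reflected_normal[OF v(1-3,5)] d(1) unfolding v(4) k_def by blast
  obtain x where x: "x \<in> QG G" "v \<bullet> x = 0" "0 < cor a \<bullet> x" using chamber_point[OF v(1-3,5)] by blast
  have "v - k *\<^sub>R cor a \<noteq> v'"
  proof
    assume eq: "v - k *\<^sub>R cor a = v'"
    obtain y where y: "y \<in> QG G" "v' \<bullet> y = 0" "0 < cor a \<bullet> y" using chamber_point[OF v'(1-4)] by blast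
    have "k * (cor a \<bullet> x) = - (v' \<bullet> x)" "k * (cor a \<bullet> y) = v \<bullet> y"
      using x(2) y(2) unfolding eq[symmetric] by (auto simp: inner_diff_left)
    moreover have "0 \<le> v' \<bullet> x" "0 \<le> v \<bullet> y" using QG_nonneg v(2) v'(2) x(1) y(1) by auto
    ultimately have "k * (cor a \<bullet> x) \<le> 0" "0 \<le> k * (cor a \<bullet> y)" by auto
    hence "k = 0" using x(3) y(3) by (simp add: mult_le_0_iff zero_le_mult_iff)
    thus False using d(2) da by simp
  qed
  hence plus: "k *\<^sub>R cor a = v + v'" using v'(6) by (auto simp: algebra_simps)
  hence kx: "k * (cor a \<bullet> x) = v' \<bullet> x" using x(2) by (metis add_0 inner_add_left inner_scaleR_left)
  moreover have "0 \<le> v' \<bullet> x" using QG_nonneg v'(2) x(1) by auto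
  ultimately have "0 \<le> k * (cor a \<bullet> x)" by simp
  hence "0 \<le> k" using x(3) by (simp add: zero_le_mult_iff)
  hence "k > 0" using d(2) da by simp
  have "v' \<noteq> v" using kx x \<open>k > 0\<close> by auto
  hence "restr G v' \<noteq> d" using restr_inj unfolding v(4) by auto
  moreover have "(\<lambda>x. k * restr G (cor a) x) = (\<lambda>x. d x + restr G v' x)"
    using arg_cong[OF plus, of "restr G"] unfolding v(4) restr_scaleR restr_add .
  ultimately show ?thesis using da \<open>k > 0\<close> v'(5) by blast
qed

text \<open>Since \<open>E(\<Gamma>)\<close> is part of a basis, \<open>\<langle>\<delta>,\<alpha>\<rangle>\<alpha>\<^sup>\<vee> = \<delta> + \<delta>'\<close> forces \<open>\<langle>\<delta>,\<alpha>\<rangle> = 1\<close>.\<close>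
lemma EG_coroot_split:
  assumes d: "d \<in> EG G" "d a \<noteq> 0"
  shows "d a = 1 \<and> (\<exists>d'\<in>EG G. d' \<noteq> d \<and> d' a = 1 \<and> restr G (cor a) = (\<lambda>x. d x + d' x))"
proof -
  obtain d' where d': "0 < d a" "d' \<in> EG G" "d' \<noteq> d" "(\<lambda>x. d a * restr G (cor a) x) = (\<lambda>x. d x + d' x)"
    using EG_coroot_multiple[OF d] by blast
  have "d a \<in> \<int>" using EG_dualZ[OF d(1)] root_ZG unfolding dualZ_def by auto
  then obtain K where K: "d a = of_int K" by (auto elim: Ints_cases)
  have "K dvd 1"
    using part_of_basis_sum_dvd[OF EG_basis d(1) d'(2) d'(3)[symmetric] restr_in_dualZ[OF coroot_lattice G_lattice]]
      d'(4) unfolding K by blast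
  hence "d a = 1" using d'(1) K by auto
  moreover have "restr G (cor a) a = 2" using root_ZG coroot_root unfolding restr_def by simp
  ultimately show ?thesis using d' fun_cong[OF d'(4), of a] by auto
qed

lemma EG_value_one:
  assumes "restr G (cor a) = (\<lambda>x. d1 x + d2 x)" "d1 \<in> EG G" "d2 \<in> EG G" "e \<in> EG G" "e a = 1"
  shows "e \<in> {d1, d2}"
proof -
  obtain e' where "e' \<in> EG G" "restr G (cor a) = (\<lambda>x. e x + e' x)" using EG_coroot_split[OF assms(4)] assms(5) by auto
  thus ?thesis using part_of_basis_sum_eq[OF EG_basis assms(4) _ assms(2,3)] assms(1) by auto
qed

lemma a_set_eq:
  assumes "restr G (cor a) = (\<lambda>x. d1 x + d2 x)" "d1 \<in> EG G" "d2 \<in> EG G" "d1 a = 1" "d2 a = 1"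
  shows "a_set G cor a = {d1, d2}"
proof
  show "{d1, d2} \<subseteq> a_set G cor a" using assms(2-5) EG_dualZ unfolding a_set_def by auto
  show "a_set G cor a \<subseteq> {d1, d2}"
  proof
    fix d assume "d \<in> a_set G cor a"
    hence d: "d a = 1" "d \<in> EG G \<or> (\<lambda>x. restr G (cor a) x - d x) \<in> EG G" unfolding a_set_def by auto
    have "restr G (cor a) a = 2" using root_ZG coroot_root unfolding restr_def by simp
    text \<open>If \<open>\<alpha>\<^sup>\<vee> - \<delta> \<in> E(\<Gamma>)\<close>, its partner in the decomposition of \<open>\<alpha>\<^sup>\<vee>\<close> is \<open>\<delta>\<close> itself.\<close>
    show "d \<in> {d1, d2}"
    proof (cases "d \<in> EG G")
      case True thus ?thesis using EG_value_one[OF assms(1-3)] d(1) by blast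
    next
      case False
      hence e: "(\<lambda>x. restr G (cor a) x - d x) \<in> EG G" "restr G (cor a) a - d a = 1"
        using d \<open>restr G (cor a) a = 2\<close> by auto
      then obtain e' where "e' \<in> EG G" "e' a = 1" "restr G (cor a) = (\<lambda>x. (restr G (cor a) x - d x) + e' x)"
        using EG_coroot_split[OF e(1)] by auto
      moreover from this have "e' = d" by (auto simp: fun_eq_iff)
      ultimately show ?thesis using EG_value_one[OF assms(1-3)] by blast
    qed
  qed
qed

theorem coroot_EG_decomposition:
  "(\<exists>d1 d2. d1 \<noteq> d2 \<and> a_set G cor a = {d1, d2} \<and> d1 \<in> EG G \<and> d2 \<in> EG G \<and>
      restr G (cor a) = (\<lambda>x. d1 x + d2 x)) \<and> (\<forall>d\<in>EG G. d a > 0 \<longrightarrow> d a = 1)"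
proof -
  have "rat_vec (cor a)" "dual_nonneg (cor a)" "cor a \<bullet> a \<noteq> 0"
    using coroot_lattice lattice_imp_rat_vec coroot_dominant coroot_root unfolding dual_nonneg_def by auto
  then obtain d1 where "d1 \<in> EG G" "d1 a \<noteq> 0" using exists_EG_nonzero[OF root_ZG] by blast
  then obtain d2 where "d1 a = 1" "d2 \<in> EG G" "d2 \<noteq> d1" "d2 a = 1" "restr G (cor a) = (\<lambda>x. d1 x + d2 x)"
    using EG_coroot_split by blast
  moreover have "\<forall>d\<in>EG G. d a > 0 \<longrightarrow> d a = 1" using EG_coroot_split by auto
  ultimately show ?thesis using a_set_eq \<open>d1 \<in> EG G\<close> by metis
qed

end

theorem mainTheorem16:
  fixes R S G :: "(real ^ 'n) set" and cor :: "(real ^ 'n) \<Rightarrow> real ^ 'n" and a :: "real ^ 'n"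
  assumes "reduced_root_datum R cor"
    and "is_base R S"
    and "reflective S cor G"
    and "S \<subseteq> ZG G"
    and "part_of_basis G (EG G)"
    and "\<forall>w\<in>weyl S cor. w ` ZG G \<subseteq> ZG G"
    and "a \<in> S"
  shows "(\<exists>d1 d2. d1 \<noteq> d2 \<and> a_set G cor a = {d1, d2} \<and> d1 \<in> EG G \<and> d2 \<in> EG G \<and>
            restr G (cor a) = (\<lambda>x. d1 x + d2 x)) \<and>
         (\<forall>d\<in>EG G. d a > 0 \<longrightarrow> d a = 1)"
proof -
  obtain H where H: "finite H" "G = {x. \<exists>c :: (real ^ 'n) \<Rightarrow> nat. x = (\<Sum>h\<in>H. of_nat (c h) *\<^sub>R h)}"
    using assms(3) unfolding reflective_def fin_gen_monoid_def by auto
  have "a \<in> R" using assms(2,7) unfolding is_base_def by auto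
  hence "cor a \<in> lattice" "cor a \<bullet> a = 2" using assms(1) unfolding reduced_root_datum_def by auto
  moreover have "refl a (cor a) \<in> weyl S cor" using weyl.weyl_step[OF weyl.weyl_id assms(7)] by simp
  moreover have "span (ZG G) = UNIV" using assms(3) dim_eq_full[of "ZG G"] unfolding reflective_def by simp
  ultimately interpret reflective_root G H S cor a
    using H assms(3-7) unfolding reflective_def dominant_def by unfold_locales auto
  show ?thesis by (rule coroot_EG_decomposition)
qed

end
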